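(* Under the standing setting (including the assumptions on $a$) and the absorbing-state assumptions (i)–(iv) in the context, there exist $K,c_1>0$, independent of $\mathbf{x}\in\mathbb{R}^N$, $\mathbf{v}\in\chi$, $\lambda>0$ and $t>0$, such that $$\|\mu_t^{\lambda,\mathbf{x},\mathbf{v}}-\tilde\mu_\infty^{\mathbf{x},\mathbf{v}}\|_{TV}\le Ke^{-c_1t\lambda}+Kt.$$
   Context: Let $N\ge1$, $\chi$ a finite set, $a:\mathbb{R}^N\times\chi\to\mathbb{R}^N$ with $a(\cdot,\mathbf{v})$ continuous and bounded for every $\mathbf{v}$ (we additionally assume $a(\cdot,\mathbf{v})$ globally Lipschitz so that all ODEs are well posed), and $\{\mathcal{P}_{\mathbf{x}}\}_{\mathbf{x}\in\mathbb{R}^N}$ a family of transition matrices on $\chi$. For $\lambda>0$, the fully coupled process $(X_t^{\lambda,\mathbf{x},\mathbf{v}},V_t^{\lambda,\mathbf{x},\mathbf{v}})$ on $\mathbb{R}^N\times\chi$ starts at $(\mathbf{x},\mathbf{v})$; $X$ is continuous and solves $\frac{d}{dt}X_t=a(X_t,V_t)$; $V$ is càdlàg, constant between rings of a Poisson clock of rate $\lambda$, and at a ring at time $s$ jumps from $V_{s-}$ to $\mathbf{v}'$ with probability $\mathcal{P}_{X_s}(V_{s-},\mathbf{v}')$. $\mu_t^{\lambda,\mathbf{x},\mathbf{v}}$ is the law of $V_t^{\lambda,\mathbf{x},\mathbf{v}}$. $\tilde V_k^{\mathbf{x},\mathbf{v}}$ is the discrete-time chain with transition matrix $\mathcal{P}_{\mathbf{x}}$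 started at $\mathbf{v}$. Absorbing-state assumptions: there are distinct states $\mathbf{e}^{(1)},\dots,\mathbf{e}^{(L)}\in\chi$ such that (i) each $\mathcal{P}_{\mathbf{x}}$ is stochastic; (ii) $\mathcal{P}_{\mathbf{x}}(\mathbf{e}^{(i)},\mathbf{e}^{(i)})=1$ for all $i,\mathbf{x}$; (iii) there exist $\tilde n\ge1$ and $z_0<1$ with $\mathbb{P}[\tilde V_{\tilde n}^{\mathbf{x},\mathbf{v}}\notin\{\mathbf{e}^{(1)},\dots,\mathbf{e}^{(L)}\}]\le z_0$ for all $\mathbf{x},\mathbf{v}$; (iv) there is $K_0>0$ with $\sum_{\mathbf{v}'}|\mathcal{P}_{\mathbf{x}}(\mathbf{v},\mathbf{v}')-\mathcal{P}_{\mathbf{x}'}(\mathbf{v},\mathbf{v}')|\le K_0\|\mathbf{x}-\mathbf{x}'\|_1$, $\|\mathbf{w}\|_1=\sum_i|w_i|$. $q^i(\mathbf{x},\mathbf{v})$ is the probability that the chain with transition matrix $\mathcal{P}_{\mathbf{x}}$ started at $\mathbf{v}$ is absorbed in $\mathbf{e}^{(i)}$; $\tilde\mu_\infty^{\mathbf{x},\mathbf{v}}$ is the probability measure on $\chi$ with mass $q^i(\mathbf{x},\mathbf{v})$ at $\mathbf{e}^{(i)}$, $1\le i\le L$, and $0$ elsewhere. $\|\mu\|_{TV}:=\sum_{\mathbf{v}'\in\chi}|\mu(\mathbf{v}')|$. *)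

theory Defs
  imports "HOL-Probability.Probability"
begin

fun mpow :: "('v::finite \<Rightarrow> 'v \<Rightarrow> real) \<Rightarrow> nat \<Rightarrow> 'v \<Rightarrow> 'v \<Rightarrow> real" where
  "mpow p 0 v w = (if v = w then 1 else 0)"
| "mpow p (Suc n) v w = (\<Sum>u\<in>UNIV. mpow p n v u * p u w)"

(* probability that the chain started at v is absorbed in the absorbing state e:
   P[exists n. V_n = e] = lim_n P[V_n = e] for an absorbing state e *)
definition absorb_prob :: "('v::finite \<Rightarrow> 'v \<Rightarrow> real) \<Rightarrow> 'v \<Rightarrow> 'v \<Rightarrow> real" where
  "absorb_prob p v e = lim (\<lambda>n. mpow p n v e)"

definition mu_infty :: "('x \<Rightarrow> 'v::finite \<Rightarrow> 'v \<Rightarrow> real) \<Rightarrow> 'v set \<Rightarrow> 'x \<Rightarrow> 'v \<Rightarrow> 'v \<Rightarrow> real" where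
  "mu_infty P E x v w = (if w \<in> E then absorb_prob (P x) v w else 0)"

definition l1norm :: "real^'n \<Rightarrow> real" where
  "l1norm x = (\<Sum>i\<in>UNIV. \<bar>x $ i\<bar>)"

(* flow of the ODE y' = a(y,v), y(0) = x (globally defined under global Lipschitz) *)
definition flow :: "(real^'n \<Rightarrow> 'v \<Rightarrow> real^'n) \<Rightarrow> 'v \<Rightarrow> real \<Rightarrow> real^'n \<Rightarrow> real^'n" where
  "flow a v s x = (THE y. y 0 = x \<and> (\<forall>r. (y has_vector_derivative a (y r) v) (at r))) s"

definition enum_states :: "'v::finite list" where
  "enum_states = (SOME xs. distinct xs \<and> set xs = UNIV)"

(* choose a state with distribution p from a uniform u in [0,1] (inverse CDF) *)
definition choose_state :: "('v::finite \<Rightarrow> real) \<Rightarrow> real \<Rightarrow> 'v" where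
  "choose_state p u = (let xs = (enum_states :: 'v list) in
     xs ! (LEAST i. Suc i = length xs \<or> u < (\<Sum>j\<le>i. p (xs ! j))))"

(* noise: omega k = (k-th interarrival time of the rate-lambda Poisson clock,
   uniform variable used for the k-th jump); all independent *)
definition noise_space :: "real \<Rightarrow> (nat \<Rightarrow> real \<times> real) measure" where
  "noise_space lam = PiM UNIV (\<lambda>_::nat.
      pair_measure (density lborel (\<lambda>s. ennreal (exponential_density lam s)))
                   (uniform_measure lborel {0..1::real}))"

definition ring_time :: "(nat \<Rightarrow> real \<times> real) \<Rightarrow> nat \<Rightarrow> real" where
  "ring_time \<omega> k = (\<Sum>j<k. fst (\<omega> j))"

(* (X_{T_k}, V_{T_k}) : the state right after the k-th jump *)
fun jump_state :: "(real^'n \<Rightarrow> 'v \<Rightarrow> real^'n) \<Rightarrow> (real^'n \<Rightarrow> 'v::finite \<Rightarrow> 'v \<Rightarrow> real)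
    \<Rightarrow> (nat \<Rightarrow> real \<times> real) \<Rightarrow> real^'n \<Rightarrow> 'v \<Rightarrow> nat \<Rightarrow> (real^'n) \<times> 'v" where
  "jump_state a P \<omega> x v 0 = (x, v)"
| "jump_state a P \<omega> x v (Suc k) =
     (let (y, w) = jump_state a P \<omega> x v k;
          y' = flow a w (fst (\<omega> k)) y
      in (y', choose_state (P y' w) (snd (\<omega> k))))"

(* V_t(omega) = V_{T_k} for T_k <= t < T_{k+1} *)
definition V_proc :: "(real^'n \<Rightarrow> 'v \<Rightarrow> real^'n) \<Rightarrow> (real^'n \<Rightarrow> 'v::finite \<Rightarrow> 'v \<Rightarrow> real)
    \<Rightarrow> real^'n \<Rightarrow> 'v \<Rightarrow> real \<Rightarrow> (nat \<Rightarrow> real \<times> real) \<Rightarrow> 'v" where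
  "V_proc a P x v t \<omega> =
     (if \<exists>k. t < ring_time \<omega> (Suc k)
      then snd (jump_state a P \<omega> x v (LEAST k. t < ring_time \<omega> (Suc k)))
      else v)"

definition mu_t :: "(real^'n \<Rightarrow> 'v \<Rightarrow> real^'n) \<Rightarrow> (real^'n \<Rightarrow> 'v::finite \<Rightarrow> 'v \<Rightarrow> real)
    \<Rightarrow> real \<Rightarrow> real^'n \<Rightarrow> 'v \<Rightarrow> real \<Rightarrow> 'v \<Rightarrow> real" where
  "mu_t a P lam x v t w =
     measure (noise_space lam) {\<omega> \<in> space (noise_space lam). V_proc a P x v t \<omega> = w}"

definition tv_norm :: "('v::finite \<Rightarrow> real) \<Rightarrow> real" where
  "tv_norm \<mu> = (\<Sum>w\<in>UNIV. \<bar>\<mu> w\<bar>)"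

end

theory Submission
  imports Defs
begin

(* Couple V with the chain W that uses the transition matrix P_x frozen at the starting point and the
   same uniform variables for its jumps. Up to time t the position stays within l1-distance O(t) of x,
   so by the Lipschitz dependence of P on the position each jump of V differs from that of W with
   probability O(t); summing over the expected number of steps W spends outside the absorbing states,
   which is finite because absorption is geometric, V and W separate before time t with probability O(t).
   Otherwise V_t equals W_m for m = floor(lam t / 4) as soon as at least m rings happened by time t and
   W_m is absorbed; the two exceptions have probability at most 2^m exp(-lam t/2) and C rho^m, both
   exponentially small in lam t. Finally the law of W_m is P_x^m, whose total variation distance to
   the absorption distribution is twice the mass not yet absorbed. *)

lemma dominated_increment:
  fixes D :: "real \<Rightarrow> 'a::euclidean_space" and \<phi> :: "real \<Rightarrow> real"
  assumes ab: "a \<le> b"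
   and dD: "\<And>s. s \<in> {a..b} \<Longrightarrow> (D has_vector_derivative D' s) (at s within {a..b})"
   and d\<phi>: "\<And>s. s \<in> {a..b} \<Longrightarrow> (\<phi> has_vector_derivative \<phi>' s) (at s within {a..b})"
   and le: "\<And>s. s \<in> {a..b} \<Longrightarrow> norm (D' s) \<le> \<phi>' s"
  shows "norm (D b - D a) \<le> \<phi> b - \<phi> a"
proof -
  have 1: "(D' has_integral (D b - D a)) {a..b}"
    by (rule fundamental_theorem_of_calculus) (use ab dD in auto)
  have 2: "(\<phi>' has_integral (\<phi> b - \<phi> a)) {a..b}"
    by (rule fundamental_theorem_of_calculus) (use ab d\<phi> in auto)
  have "norm (integral {a..b} D') \<le> integral {a..b} \<phi>'"
    by (rule integral_norm_bound_integral) (use 1 2 le in auto)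
  then show ?thesis using 1 2 by (simp add: integral_unique)
qed

lemma dominated_increment_abs:
  fixes D :: "real \<Rightarrow> 'a::euclidean_space" and \<psi> :: "real \<Rightarrow> real"
  assumes dD: "\<And>s. (D has_vector_derivative D' s) (at s)"
   and d\<psi>: "\<And>s. (\<psi> has_vector_derivative \<psi>' s) (at s)"
   and le: "\<And>s. \<bar>s\<bar> \<le> \<bar>r\<bar> \<Longrightarrow> norm (D' s) \<le> \<psi>' \<bar>s\<bar>"
  shows "norm (D r - D 0) \<le> \<psi> \<bar>r\<bar> - \<psi> 0"
proof (cases "r \<ge> 0")
  case True
  have le': "norm (D' s) \<le> \<psi>' s" if "s \<in> {0..r}" for s
    using le[of s] that True by simp
  show ?thesis using True
    by (auto intro!: dominated_increment[where D'=D' and \<phi>'=\<psi>'] has_vector_derivative_at_within dD d\<psi> le')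
next
  case False
  have d2: "((\<lambda>s. D (- s)) has_vector_derivative - D' (- s)) (at s)" for s
    using vector_diff_chain_at[OF has_vector_derivative_minus[OF has_vector_derivative_id] dD[of "-s"]]
    by (simp add: o_def)
  have le': "norm (D' (- s)) \<le> \<psi>' s" if "0 \<le> s" "s \<le> - r" for s
    using le[of "-s"] that by simp
  have "norm (D (- (- r)) - D (- 0)) \<le> \<psi> (- r) - \<psi> 0"
    using False
    by (intro dominated_increment[where D'="\<lambda>s. - D' (- s)" and \<phi>'=\<psi>'])
       (auto intro!: has_vector_derivative_at_within d2 d\<psi> le')
  then show ?thesis using False by simp
qed

lemma has_vector_derivative_linear: "((\<lambda>s::real. c * s) has_vector_derivative c) (at s within S)"
  using has_real_derivative_iff_has_vector_derivative[THEN iffD1, OF DERIV_cmult_Id[of c s]]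
  by (rule has_vector_derivative_at_within)

(* Gronwall in its crudest form: on an interval of length 1/(2L) the largest gap D satisfies
   D <= gap r0 + D/2. Iterating gives uniqueness without exponentials. *)
lemma ode_gap_doubling:
  fixes f :: "'a::euclidean_space \<Rightarrow> 'a"
  assumes lip: "\<And>u v. norm (f u - f v) \<le> L * norm (u - v)" and L: "L > 0"
    and y: "\<And>r. (y has_vector_derivative f (y r)) (at r)"
    and z: "\<And>r. (z has_vector_derivative f (z r)) (at r)"
    and r: "r0 \<le> r" "r \<le> r0 + 1/(2*L)"
  shows "norm (y r - z r) \<le> 2 * norm (y r0 - z r0)"
proof -
  define I where "I = {r0..r0 + 1/(2*L)}"
  have cy: "continuous_on I (\<lambda>s. norm (y s - z s))"
    using y z by (intro continuous_at_imp_continuous_on ballI continuous_intros has_vector_derivative_continuous) 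
  obtain rm where rm: "rm \<in> I" "\<And>s. s\<in>I \<Longrightarrow> norm (y s - z s) \<le> norm (y rm - z rm)"
    using continuous_attains_sup[OF _ _ cy] L unfolding I_def by auto
  define D where "D = norm (y rm - z rm)"
  have D0: "D \<ge> 0" unfolding D_def by simp
  have key: "norm (y s - z s) \<le> norm (y r0 - z r0) + D/2" if s: "s \<in> I" for s
  proof -
    have "norm ((y s - z s) - (y r0 - z r0)) \<le> L * D * s - L * D * r0"
    proof (rule dominated_increment[where D'="\<lambda>u. f (y u) - f (z u)" and \<phi>'="\<lambda>_. L*D"])
      show "r0 \<le> s" using s unfolding I_def by auto
      show "((\<lambda>u. y u - z u) has_vector_derivative f (y u) - f (z u)) (at u within {r0..s})" for u
        using has_vector_derivative_diff[OF y[of u] z[of u]] by (rule has_vector_derivative_at_within)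
      show "((\<lambda>u. L*D*u) has_vector_derivative L*D) (at u within {r0..s})" for u
        by (rule has_vector_derivative_linear)
      show "norm (f (y u) - f (z u)) \<le> L * D" if "u \<in> {r0..s}" for u
      proof -
        have "u \<in> I" using that s unfolding I_def by auto
        then have "norm (y u - z u) \<le> D" using rm unfolding D_def by auto
        then have "L * norm (y u - z u) \<le> L * D" using L by (intro mult_left_mono) auto
        then show ?thesis using lip[of "y u" "z u"] by linarith
      qed
    qed
    also have "L * D * s - L * D * r0 = L * D * (s - r0)" by (simp add: algebra_simps)
    also have "\<dots> \<le> L*D*(1/(2*L))"
      using s L D0 unfolding I_def by (intro mult_left_mono) auto
    also have "\<dots> = D/2" using L by simp
    finally have "norm ((y s - z s) - (y r0 - z r0)) \<le> D/2" .
    then show ?thesis using norm_triangle_sub[of "y s - z s" "y r0 - z r0"] by linarith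
  qed
  from key[OF rm(1)] have "D \<le> 2 * norm (y r0 - z r0)" unfolding D_def by linarith
  moreover have "r \<in> I" using r unfolding I_def by auto
  ultimately show ?thesis using rm(2) unfolding D_def by fastforce
qed

lemma ode_gap_growth_forward:
  fixes f :: "'a::euclidean_space \<Rightarrow> 'a"
  assumes lip: "\<And>u v. norm (f u - f v) \<le> L * norm (u - v)" and L: "L > 0"
    and y: "\<And>r. (y has_vector_derivative f (y r)) (at r)"
    and z: "\<And>r. (z has_vector_derivative f (z r)) (at r)"
  shows "0 \<le> r \<Longrightarrow> r \<le> real k / (2*L) \<Longrightarrow> norm (y r - z r) \<le> 2^k * norm (y 0 - z 0)"
proof (induction k arbitrary: r)
  case 0
  then have "r = 0" using L by simp
  then show ?case by simp
next
  case (Suc k)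
  show ?case
  proof (cases "r \<le> real k / (2*L)")
    case True
    then have "norm (y r - z r) \<le> 2^k * norm (y 0 - z 0)" using Suc by auto
    also have "\<dots> \<le> 2^Suc k * norm (y 0 - z 0)" by simp
    finally show ?thesis .
  next
    case False
    have "norm (y r - z r) \<le> 2 * norm (y (real k / (2*L)) - z (real k / (2*L)))"
      by (rule ode_gap_doubling[OF lip L y z]) (use False Suc.prems L in \<open>auto simp: field_simps\<close>)
    also have "\<dots> \<le> 2 * (2^k * norm (y 0 - z 0))"
      using Suc.IH[of "real k / (2*L)"] L by auto
    finally show ?thesis by simp
  qed
qed

lemma ode_solution_reflect:
  assumes y: "\<And>r. (y has_vector_derivative f (y r)) (at r)"
  shows "((\<lambda>s. y (- s)) has_vector_derivative - f (y (- r))) (at r)"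
  using vector_diff_chain_at[OF has_vector_derivative_minus[OF has_vector_derivative_id] y[of "-r"]]
  by (simp add: o_def)

lemma ode_gap_growth:
  fixes f :: "'a::euclidean_space \<Rightarrow> 'a"
  assumes lip: "\<And>u v. norm (f u - f v) \<le> L * norm (u - v)" and L: "L > 0"
    and y: "\<And>r. (y has_vector_derivative f (y r)) (at r)"
    and z: "\<And>r. (z has_vector_derivative f (z r)) (at r)"
    and r: "\<bar>r\<bar> \<le> real k / (2*L)"
  shows "norm (y r - z r) \<le> 2^k * norm (y 0 - z 0)"
proof (cases "r \<ge> 0")
  case True
  then show ?thesis using ode_gap_growth_forward[OF lip L y z] r by auto
next
  case False
  have lip': "norm ((\<lambda>u. - f u) u - (\<lambda>u. - f u) v) \<le> L * norm (u - v)" for u v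
    using lip[of u v] by (simp add: norm_minus_commute)
  have "norm ((\<lambda>s. y (- s)) (-r) - (\<lambda>s. z (- s)) (-r)) \<le> 2^k * norm ((\<lambda>s. y (- s)) 0 - (\<lambda>s. z (- s)) 0)"
    by (rule ode_gap_growth_forward[OF lip' L]) (use ode_solution_reflect[OF y] ode_solution_reflect[OF z] False r in auto)
  then show ?thesis by simp
qed

definition signed_integral :: "(real \<Rightarrow> 'a::euclidean_space) \<Rightarrow> real \<Rightarrow> 'a" where
  "signed_integral g r = integral {0..r} g - integral {r..0} g"

lemma signed_integral_0[simp]: "signed_integral g 0 = 0"
  by (simp add: signed_integral_def)

lemma signed_integral_has_derivative:
  fixes g :: "real \<Rightarrow> 'a::euclidean_space"
  assumes gc: "continuous_on UNIV g"
  shows "(signed_integral g has_vector_derivative g r) (at r)"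
proof -
  define R where "R = \<bar>r\<bar> + 1"
  have cg: "continuous_on {-R..R} g" using gc continuous_on_subset by blast
  have int: "g integrable_on {-R..R}" by (rule integrable_continuous_real[OF cg])
  have eq: "integral {-R..s} g - integral {-R..0} g = signed_integral g s" if "s \<in> {-R<..<R}" for s
  proof (cases "0 \<le> s")
    case True
    have "integral {-R..0} g + integral {0..s} g = integral {-R..s} g"
      by (rule Henstock_Kurzweil_Integration.integral_combine) (use True that R_def in \<open>auto intro: integrable_on_subinterval[OF int]\<close>)
    moreover have "integral {s..0} g = 0"
    proof (cases "s = 0")
      case True then show ?thesis by simp
    next
      case False then show ?thesis using \<open>0 \<le> s\<close> by simp
    qed
    ultimately show ?thesis unfolding signed_integral_def by (simp add: algebra_simps)
  next
    case False
    have "integral {-R..s} g + integral {s..0} g = integral {-R..0} g"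
      by (rule Henstock_Kurzweil_Integration.integral_combine) (use False that R_def in \<open>auto intro: integrable_on_subinterval[OF int]\<close>)
    moreover have "integral {0..s} g = 0" using False by simp
    ultimately show ?thesis unfolding signed_integral_def by (simp add: algebra_simps)
  qed
  have d: "((\<lambda>s. integral {-R..s} g - integral {-R..0} g) has_vector_derivative g r) (at r)"
  proof -
    have "((\<lambda>s. integral {-R..s} g) has_vector_derivative g r) (at r within {-R..R})"
      by (rule integral_has_vector_derivative[OF cg]) (auto simp: R_def)
    then have "((\<lambda>s. integral {-R..s} g) has_vector_derivative g r) (at r within {-R<..<R})"
      by (rule has_vector_derivative_within_subset) auto
    then have "((\<lambda>s. integral {-R..s} g) has_vector_derivative g r) (at r)"
      by (subst (asm) at_within_open) (auto simp: R_def)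
    then show ?thesis using has_vector_derivative_diff[OF _ has_vector_derivative_const] by fastforce
  qed
  show ?thesis by (rule has_vector_derivative_transform_within_open[OF d, of "{-R<..<R}"]) (use eq R_def in auto)
qed

lemma integral_equation_has_derivative:
  fixes f :: "'a::euclidean_space \<Rightarrow> 'a"
  assumes fc: "continuous_on UNIV f" and hc: "continuous_on UNIV h"
  shows "((\<lambda>r. x + signed_integral (\<lambda>s. f (h s)) r) has_vector_derivative f (h r)) (at r)"
proof -
  have "continuous_on UNIV (\<lambda>s. f (h s))"
    using continuous_on_compose2[OF fc hc] by auto
  from has_vector_derivative_add[OF has_vector_derivative_const signed_integral_has_derivative[OF this]]
  show ?thesis by simp
qed

lemma norm_signed_integral_diff_le:
  fixes g h :: "real \<Rightarrow> 'a::euclidean_space"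
  assumes "continuous_on UNIV g" "continuous_on UNIV h" and "\<And>s. \<bar>s\<bar> \<le> \<bar>r\<bar> \<Longrightarrow> norm (g s - h s) \<le> B"
  shows "norm (signed_integral g r - signed_integral h r) \<le> B * \<bar>r\<bar>"
proof -
  have "norm ((\<lambda>r. signed_integral g r - signed_integral h r) r - (\<lambda>r. signed_integral g r - signed_integral h r) 0)
      \<le> B * \<bar>r\<bar> - B * 0"
    by (rule dominated_increment_abs[where D'="\<lambda>s. g s - h s"])
      (use assms in \<open>auto intro!: has_vector_derivative_diff signed_integral_has_derivative
          has_vector_derivative_linear\<close>)
  then show ?thesis by simp
qed

fun picard_iter :: "('a::euclidean_space \<Rightarrow> 'a) \<Rightarrow> 'a \<Rightarrow> nat \<Rightarrow> real \<Rightarrow> 'a" where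
  "picard_iter f x 0 = (\<lambda>r. x)"
| "picard_iter f x (Suc k) = (\<lambda>r. x + signed_integral (\<lambda>s. f (picard_iter f x k s)) r)"

lemma picard_iter_continuous:
  assumes fc: "continuous_on UNIV f"
  shows "continuous_on UNIV (picard_iter f x k)"
proof (induction k)
  case 0 then show ?case by simp
next
  case (Suc k)
  show ?case
    using integral_equation_has_derivative[OF fc Suc, of x]
    by (auto intro!: continuous_at_imp_continuous_on has_vector_derivative_continuous)
qed

lemma picard_iter_has_derivative:
  assumes fc: "continuous_on UNIV f"
  shows "(picard_iter f x (Suc k) has_vector_derivative f (picard_iter f x k r)) (at r)"
  using integral_equation_has_derivative[OF fc picard_iter_continuous[OF fc]] by simp

definition picard_bound :: "real \<Rightarrow> real \<Rightarrow> nat \<Rightarrow> real \<Rightarrow> real" where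
  "picard_bound M L k \<rho> = M * L^k * \<rho>^Suc k / fact (Suc k)"

definition picard_bound_deriv :: "real \<Rightarrow> real \<Rightarrow> nat \<Rightarrow> real \<Rightarrow> real" where
  "picard_bound_deriv M L k \<rho> = M * L^k * \<rho>^k / fact k"

lemma picard_bound_has_derivative: "(picard_bound M L k has_vector_derivative picard_bound_deriv M L k \<rho>) (at \<rho>)"
proof -
  have "DERIV (picard_bound M L k) \<rho> :> M * L^k * (real (Suc k) * \<rho>^k) / fact (Suc k)"
    unfolding picard_bound_def by (intro derivative_eq_intros) auto
  also have "M * L^k * (real (Suc k) * \<rho>^k) / fact (Suc k) = picard_bound_deriv M L k \<rho>"
  proof -
    have "real (Suc k) / fact (Suc k) = 1 / (fact k :: real)"
      by (simp add: fact_Suc del: of_nat_Suc)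
    then show ?thesis unfolding picard_bound_deriv_def by (metis (no_types, lifting) times_divide_eq_right mult.assoc mult.commute times_divide_eq_left mult_1)
  qed
  finally show ?thesis by (simp add: has_real_derivative_iff_has_vector_derivative)
qed

lemma picard_iter_step_le:
  fixes f :: "'a::euclidean_space \<Rightarrow> 'a"
  assumes fc: "continuous_on UNIV f" and bnd: "\<And>u. norm (f u) \<le> M"
    and lip: "\<And>u v. norm (f u - f v) \<le> L * norm (u - v)" and L: "L > 0"
  shows "norm (picard_iter f x (Suc k) r - picard_iter f x k r) \<le> picard_bound M L k \<bar>r\<bar>"
proof (induction k arbitrary: r)
  case 0
  have "norm ((\<lambda>r. picard_iter f x (Suc 0) r - x) r - (\<lambda>r. picard_iter f x (Suc 0) r - x) 0) \<le> picard_bound M L 0 \<bar>r\<bar> - picard_bound M L 0 0"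
  proof (rule dominated_increment_abs[where D'="\<lambda>_. f x"])
    show "((\<lambda>r. picard_iter f x (Suc 0) r - x) has_vector_derivative f x) (at s)" for s
      using has_vector_derivative_diff[OF picard_iter_has_derivative[OF fc, of x 0 s] has_vector_derivative_const[of x]] by (simp only: picard_iter.simps(1) diff_zero)
    show "(picard_bound M L 0 has_vector_derivative picard_bound_deriv M L 0 s) (at s)" for s by (rule picard_bound_has_derivative)
    show "norm (f x) \<le> picard_bound_deriv M L 0 \<bar>s\<bar>" for s using bnd by (simp add: picard_bound_deriv_def)
  qed
  then show ?case by (simp add: picard_bound_def)
next
  case (Suc k)
  have "norm ((\<lambda>r. picard_iter f x (Suc (Suc k)) r - picard_iter f x (Suc k) r) r - (\<lambda>r. picard_iter f x (Suc (Suc k)) r - picard_iter f x (Suc k) r) 0)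
      \<le> picard_bound M L (Suc k) \<bar>r\<bar> - picard_bound M L (Suc k) 0"
  proof (rule dominated_increment_abs[where D'="\<lambda>s. f (picard_iter f x (Suc k) s) - f (picard_iter f x k s)"])
    show "((\<lambda>r. picard_iter f x (Suc (Suc k)) r - picard_iter f x (Suc k) r) has_vector_derivative f (picard_iter f x (Suc k) s) - f (picard_iter f x k s)) (at s)" for s
      using has_vector_derivative_diff[OF picard_iter_has_derivative[OF fc, of x "Suc k" s] picard_iter_has_derivative[OF fc, of x k s]] by simp
    show "(picard_bound M L (Suc k) has_vector_derivative picard_bound_deriv M L (Suc k) s) (at s)" for s by (rule picard_bound_has_derivative)
    show "norm (f (picard_iter f x (Suc k) s) - f (picard_iter f x k s)) \<le> picard_bound_deriv M L (Suc k) \<bar>s\<bar>" for s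
    proof -
      have "L * norm (picard_iter f x (Suc k) s - picard_iter f x k s) \<le> L * picard_bound M L k \<bar>s\<bar>"
        using Suc.IH[of s] L by (intro mult_left_mono) auto
      also have "\<dots> = picard_bound_deriv M L (Suc k) \<bar>s\<bar>" by (simp add: picard_bound_def picard_bound_deriv_def)
      finally show ?thesis using lip[of "picard_iter f x (Suc k) s" "picard_iter f x k s"] by linarith
    qed
  qed
  then show ?case by (simp add: picard_bound_def)
qed

context
  fixes f :: "'a::euclidean_space \<Rightarrow> 'a" and M L :: real
  assumes fc: "continuous_on UNIV f" and bnd: "\<And>u. norm (f u) \<le> M"
    and lip: "\<And>u v. norm (f u - f v) \<le> L * norm (u - v)" and L: "L > 0"
begin

lemma field_bound_nonneg: "M \<ge> 0" using bnd[of 0] norm_ge_zero order_trans by blast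

lemma picard_bound_summable: "summable (\<lambda>k. picard_bound M L k \<rho>)"
proof -
  have "summable (\<lambda>n. inverse (fact n) * (L*\<rho>)^n)" by (rule summable_exp)
  then have "summable (\<lambda>n. inverse (fact (n+1)) * (L*\<rho>)^(n+1))"
    by (rule summable_ignore_initial_segment)
  then have "summable (\<lambda>n. (M/L) * (inverse (fact (n+1)) * (L*\<rho>)^(n+1)))"
    by (rule summable_mult)
  moreover have "(M/L) * (inverse (fact (n+1)) * (L*\<rho>)^(n+1)) = picard_bound M L n \<rho>" for n
    using L by (simp add: picard_bound_def power_mult_distrib field_simps)
  ultimately show ?thesis by simp
qed

lemma picard_bound_mono: "0 \<le> \<rho> \<Longrightarrow> \<rho> \<le> \<rho>' \<Longrightarrow> picard_bound M L k \<rho> \<le> picard_bound M L k \<rho>'"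
  unfolding picard_bound_def using field_bound_nonneg L
  by (intro divide_right_mono mult_left_mono power_mono) auto

lemma picard_steps_summable: "summable (\<lambda>j. picard_iter f x (Suc j) r - picard_iter f x j r)"
  by (rule summable_comparison_test'[OF picard_bound_summable[of "\<bar>r\<bar>"]]) (use picard_iter_step_le[OF fc bnd lip L] in auto)

definition picard_solution :: "'a \<Rightarrow> real \<Rightarrow> 'a" where
  "picard_solution x r = x + (\<Sum>j. picard_iter f x (Suc j) r - picard_iter f x j r)"

lemma picard_iter_telescope: "picard_iter f x k r = x + (\<Sum>j<k. picard_iter f x (Suc j) r - picard_iter f x j r)"
proof -
  have "(\<Sum>j<k. picard_iter f x (Suc j) r - picard_iter f x j r) = picard_iter f x k r - picard_iter f x 0 r"
    by (rule sum_lessThan_telescope)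
  then show ?thesis by (metis add.commute diff_add_cancel picard_iter.simps(1))
qed

lemma picard_iter_tendsto: "(\<lambda>k. picard_iter f x k r) \<longlonglongrightarrow> picard_solution x r"
proof -
  have e: "(\<lambda>k. picard_iter f x k r) = (\<lambda>k. x + (\<Sum>j<k. picard_iter f x (Suc j) r - picard_iter f x j r))"
    by (rule ext) (rule picard_iter_telescope)
  show ?thesis unfolding e picard_solution_def by (intro tendsto_add tendsto_const summable_LIMSEQ picard_steps_summable)
qed

lemma picard_tail_bound: "norm (picard_solution x r - picard_iter f x k r) \<le> (\<Sum>j. picard_bound M L (j + k) \<bar>r\<bar>)"
proof -
  have "picard_solution x r - picard_iter f x k r = (\<Sum>j. picard_iter f x (Suc (j+k)) r - picard_iter f x (j+k) r)"
  proof -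
    have "(\<Sum>j. picard_iter f x (Suc (j+k)) r - picard_iter f x (j+k) r) = (\<Sum>j. picard_iter f x (Suc j) r - picard_iter f x j r) - (\<Sum>j<k. picard_iter f x (Suc j) r - picard_iter f x j r)"
      using suminf_minus_initial_segment[OF picard_steps_summable[of x r], of k] by (simp only: add_Suc)
    then show ?thesis unfolding picard_solution_def picard_iter_telescope[of x k r] by (simp only: add_diff_cancel_left)
  qed
  also have "norm \<dots> \<le> (\<Sum>j. picard_bound M L (j + k) \<bar>r\<bar>)"
  proof (rule norm_suminf_le)
    show "norm (picard_iter f x (Suc (j+k)) r - picard_iter f x (j+k) r) \<le> picard_bound M L (j+k) \<bar>r\<bar>" for j
      by (rule picard_iter_step_le[OF fc bnd lip L])
    show "summable (\<lambda>j. picard_bound M L (j+k) \<bar>r\<bar>)" by (rule summable_ignore_initial_segment[OF picard_bound_summable])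
  qed
  finally show ?thesis .
qed

lemma picard_tail_mono:
  assumes "0 \<le> \<rho>" "\<rho> \<le> \<rho>'"
  shows "(\<Sum>j. picard_bound M L (j + k) \<rho>) \<le> (\<Sum>j. picard_bound M L (j + k) \<rho>')"
proof (rule suminf_le)
  show "picard_bound M L (j + k) \<rho> \<le> picard_bound M L (j + k) \<rho>'" for j
    by (rule picard_bound_mono[OF assms])
qed (auto intro!: summable_ignore_initial_segment[OF picard_bound_summable])

lemma picard_tail_tendsto_0: "(\<lambda>k. \<Sum>j. picard_bound M L (j + k) \<rho>) \<longlonglongrightarrow> 0"
proof -
  have "(\<lambda>k. (\<Sum>j. picard_bound M L j \<rho>) - (\<Sum>j<k. picard_bound M L j \<rho>)) \<longlonglongrightarrow> (\<Sum>j. picard_bound M L j \<rho>) - (\<Sum>j. picard_bound M L j \<rho>)"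
    by (intro tendsto_diff tendsto_const summable_LIMSEQ picard_bound_summable)
  then show ?thesis using suminf_minus_initial_segment[OF picard_bound_summable] by simp
qed

lemma picard_iter_lipschitz: "norm (picard_iter f x k r - picard_iter f x k s) \<le> M * \<bar>r - s\<bar>"
proof (cases k)
  case 0 then show ?thesis using field_bound_nonneg by simp
next
  case (Suc j)
  have *: "norm (picard_iter f x (Suc j) b - picard_iter f x (Suc j) a) \<le> M * b - M * a" if "a \<le> b" for a b
    by (rule dominated_increment[where D'="\<lambda>s. f (picard_iter f x j s)" and \<phi>'="\<lambda>_. M"])
       (use that in \<open>auto intro!: has_vector_derivative_at_within picard_iter_has_derivative[OF fc] has_vector_derivative_linear bnd simp del: picard_iter.simps\<close>)
  show ?thesis
  proof (cases "s \<le> r")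
    case True
    then have e: "M * \<bar>r - s\<bar> = M * r - M * s" by (simp add: algebra_simps)
    show ?thesis unfolding e Suc by (rule *[OF True])
  next
    case False
    then have e: "M * \<bar>r - s\<bar> = M * s - M * r" by (simp add: algebra_simps)
    show ?thesis unfolding e Suc norm_minus_commute[of "picard_iter f x (Suc j) r"] by (rule *) (use False in simp)
  qed
qed

lemma picard_solution_lipschitz: "norm (picard_solution x r - picard_solution x s) \<le> M * \<bar>r - s\<bar>"
proof -
  have "(\<lambda>k. norm (picard_iter f x k r - picard_iter f x k s)) \<longlonglongrightarrow> norm (picard_solution x r - picard_solution x s)"
    by (intro tendsto_intros picard_iter_tendsto)
  then show ?thesis by (rule LIMSEQ_le_const2) (auto intro: picard_iter_lipschitz)
qed

lemma picard_solution_continuous: "continuous_on UNIV (picard_solution x)"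
proof -
  have "M-lipschitz_on UNIV (picard_solution x)"
    by (rule lipschitz_onI) (use picard_solution_lipschitz field_bound_nonneg in \<open>auto simp: dist_norm dist_real_def\<close>)
  then show ?thesis by (rule lipschitz_on_continuous_on)
qed

lemma picard_solution_fixpoint: "picard_solution x r = x + signed_integral (\<lambda>s. f (picard_solution x s)) r"
proof -
  have cy: "continuous_on UNIV (\<lambda>s. f (picard_solution x s))"
    using continuous_on_compose2[OF fc picard_solution_continuous] by auto
  have close: "norm (signed_integral (\<lambda>s. f (picard_iter f x k s)) r - signed_integral (\<lambda>s. f (picard_solution x s)) r)
      \<le> L * (\<Sum>j. picard_bound M L (j + k) \<bar>r\<bar>) * \<bar>r\<bar>" for k
  proof (rule norm_signed_integral_diff_le)
    show "continuous_on UNIV (\<lambda>s. f (picard_iter f x k s))"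
      using continuous_on_compose2[OF fc picard_iter_continuous[OF fc]] by auto
    show "norm (f (picard_iter f x k s) - f (picard_solution x s)) \<le> L * (\<Sum>j. picard_bound M L (j + k) \<bar>r\<bar>)"
      if "\<bar>s\<bar> \<le> \<bar>r\<bar>" for s
    proof -
      have "norm (picard_iter f x k s - picard_solution x s) \<le> (\<Sum>j. picard_bound M L (j + k) \<bar>r\<bar>)"
        using picard_tail_bound[of x s k] picard_tail_mono[of "\<bar>s\<bar>" "\<bar>r\<bar>" k] that
        by (simp add: norm_minus_commute)
      then have "L * norm (picard_iter f x k s - picard_solution x s) \<le> L * (\<Sum>j. picard_bound M L (j + k) \<bar>r\<bar>)"
        using L by (intro mult_left_mono) auto
      then show ?thesis
        using lip[of "picard_iter f x k s" "picard_solution x s"] by linarith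
    qed
  qed (rule cy)
  have "(\<lambda>k. L * (\<Sum>j. picard_bound M L (j + k) \<bar>r\<bar>) * \<bar>r\<bar>) \<longlonglongrightarrow> L * 0 * \<bar>r\<bar>"
    by (intro tendsto_mult tendsto_const picard_tail_tendsto_0)
  then have "(\<lambda>k. signed_integral (\<lambda>s. f (picard_iter f x k s)) r - signed_integral (\<lambda>s. f (picard_solution x s)) r)
      \<longlonglongrightarrow> 0"
    by (intro Lim_null_comparison[OF always_eventually[OF allI[OF close]]]) simp
  then have "(\<lambda>k. x + signed_integral (\<lambda>s. f (picard_iter f x k s)) r)
      \<longlonglongrightarrow> x + signed_integral (\<lambda>s. f (picard_solution x s)) r"
    by (intro tendsto_add tendsto_const) (simp add: LIM_zero_iff)
  then have "(\<lambda>k. picard_iter f x (Suc k) r) \<longlonglongrightarrow> x + signed_integral (\<lambda>s. f (picard_solution x s)) r"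
    by simp
  then show ?thesis
    using LIMSEQ_unique[OF LIMSEQ_Suc[OF picard_iter_tendsto]] by blast
qed

lemma picard_solution_0: "picard_solution x 0 = x"
  using picard_solution_fixpoint[of x 0] by simp

lemma picard_solution_has_derivative: "(picard_solution x has_vector_derivative f (picard_solution x r)) (at r)"
proof -
  have "((\<lambda>r. x + signed_integral (\<lambda>s. f (picard_solution x s)) r) has_vector_derivative f (picard_solution x r)) (at r)"
    by (rule integral_equation_has_derivative[OF fc picard_solution_continuous])
  then show ?thesis
    by (rule has_vector_derivative_transform_within_open[OF _ open_UNIV UNIV_I]) (rule picard_solution_fixpoint[symmetric])
qed

lemma ode_ex1_global_solution: "\<exists>!y. y 0 = x \<and> (\<forall>r. (y has_vector_derivative f (y r)) (at r))"
proof (rule ex1I[of _ "picard_solution x"])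
  show "picard_solution x 0 = x \<and> (\<forall>r. (picard_solution x has_vector_derivative f (picard_solution x r)) (at r))"
    using picard_solution_0 picard_solution_has_derivative by auto
  fix y assume y: "y 0 = x \<and> (\<forall>r. (y has_vector_derivative f (y r)) (at r))"
  show "y = picard_solution x"
  proof
    fix r
    obtain k :: nat where k: "\<bar>r\<bar> * (2*L) \<le> k" using real_arch_simple by blast
    then have "\<bar>r\<bar> \<le> real k / (2*L)" using L by (simp add: field_simps)
    moreover have y': "\<And>r. (y has_vector_derivative f (y r)) (at r)" using y by auto
    ultimately have "norm (y r - picard_solution x r) \<le> 2^k * norm (y 0 - picard_solution x 0)"
      using ode_gap_growth[OF lip L y' picard_solution_has_derivative] by blast
    then show "y r = picard_solution x r" using y picard_solution_0 by simp
  qed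
qed

end

definition exp_dist :: "real \<Rightarrow> real measure" where
  "exp_dist lam = density lborel (\<lambda>s. ennreal (exponential_density lam s))"
definition unif01 :: "real measure" where
  "unif01 = uniform_measure lborel {0..1::real}"
definition noise_factor :: "real \<Rightarrow> (real \<times> real) measure" where
  "noise_factor lam = exp_dist lam \<Otimes>\<^sub>M unif01"

lemma noise_space_eq_PiM: "noise_space lam = PiM UNIV (\<lambda>_. noise_factor lam)"
  by (simp add: noise_space_def noise_factor_def exp_dist_def unif01_def)

lemma prob_space_exp_dist: "lam > 0 \<Longrightarrow> prob_space (exp_dist lam)"
  unfolding exp_dist_def using prob_space_exponential_density by simp

lemma prob_space_unif01: "prob_space unif01"
  unfolding unif01_def by (rule prob_space_uniform_measure) auto

lemma prob_space_noise_factor: "lam > 0 \<Longrightarrow> prob_space (noise_factor lam)"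
  unfolding noise_factor_def by (intro prob_space_pair prob_space_exp_dist prob_space_unif01)

lemma sets_exp_dist[simp, measurable_cong]: "sets (exp_dist lam) = sets borel"
  by (simp add: exp_dist_def)
lemma space_exp_dist[simp]: "space (exp_dist lam) = UNIV"
  by (simp add: exp_dist_def)
lemma sets_unif01[simp, measurable_cong]: "sets unif01 = sets borel"
  by (simp add: unif01_def)
lemma space_unif01[simp]: "space unif01 = UNIV"
  by (simp add: unif01_def)
lemma sets_noise_factor[measurable_cong]: "sets (noise_factor lam) = sets (borel \<Otimes>\<^sub>M borel)"
  unfolding noise_factor_def by (rule sets_pair_measure_cong) auto
lemma space_noise_factor[simp]: "space (noise_factor lam) = UNIV"
  by (simp add: noise_factor_def space_pair_measure)

lemma measurable_fst_noise_factor[measurable]: "fst \<in> borel_measurable (noise_factor lam)"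
  using measurable_fst[of "borel::real measure" "borel::real measure"]
  by (simp add: measurable_cong_sets[OF sets_noise_factor refl])
lemma measurable_snd_noise_factor[measurable]: "snd \<in> borel_measurable (noise_factor lam)"
  using measurable_snd[of "borel::real measure" "borel::real measure"]
  by (simp add: measurable_cong_sets[OF sets_noise_factor refl])

lemma measurable_noise_component[measurable]: "(\<lambda>\<omega>. \<omega> k) \<in> measurable (noise_space lam) (noise_factor lam)"
  unfolding noise_space_eq_PiM by (rule measurable_component_singleton) simp

lemma measurable_interarrival[measurable]: "(\<lambda>\<omega>. fst (\<omega> k)) \<in> borel_measurable (noise_space lam)"
  by (rule measurable_compose[OF measurable_noise_component measurable_fst_noise_factor])
lemma measurable_uniform_noise[measurable]: "(\<lambda>\<omega>. snd (\<omega> k)) \<in> borel_measurable (noise_space lam)"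
  by (rule measurable_compose[OF measurable_noise_component measurable_snd_noise_factor])

lemma emeasure_noise_space_case_nat:
  assumes lam: "lam > 0" and A: "A \<in> sets (noise_space lam)"
  shows "emeasure (noise_space lam) A =
    (\<integral>\<^sup>+ s. emeasure (noise_space lam) {\<omega> \<in> space (noise_space lam). case_nat s \<omega> \<in> A} \<partial>noise_factor lam)"
proof -
  interpret prob_space "noise_factor lam" by (rule prob_space_noise_factor[OF lam])
  interpret S: sequence_space "noise_factor lam" ..
  let ?f = "\<lambda>(s, \<omega>). case_nat s \<omega>"
  have D: "distr (noise_factor lam \<Otimes>\<^sub>M S.S) S.S ?f = S.S" by (rule S.PiM_iter)
  have mf: "?f \<in> measurable (noise_factor lam \<Otimes>\<^sub>M S.S) S.S" by measurable
  have A': "A \<in> sets S.S" using A by (simp add: noise_space_eq_PiM)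
  have "emeasure S.S A = emeasure (distr (noise_factor lam \<Otimes>\<^sub>M S.S) S.S ?f) A" by (simp add: D)
  also have "\<dots> = emeasure (noise_factor lam \<Otimes>\<^sub>M S.S) (?f -` A \<inter> space (noise_factor lam \<Otimes>\<^sub>M S.S))"
    by (rule emeasure_distr[OF mf A'])
  also have "\<dots> = (\<integral>\<^sup>+ s. emeasure S.S (Pair s -` (?f -` A \<inter> space (noise_factor lam \<Otimes>\<^sub>M S.S))) \<partial>noise_factor lam)"
    by (rule S.emeasure_pair_measure_alt) (use mf A' in auto)
  also have "\<dots> = (\<integral>\<^sup>+ s. emeasure S.S {\<omega> \<in> space S.S. case_nat s \<omega> \<in> A} \<partial>noise_factor lam)"
    by (intro nn_integral_cong arg_cong2[where f=emeasure] refl) (auto simp: space_pair_measure)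
  finally show ?thesis by (simp add: noise_space_eq_PiM)
qed

lemma noise_factor_nn_integral:
  assumes lam: "lam > 0" and g: "g \<in> borel_measurable (noise_factor lam)"
  shows "(\<integral>\<^sup>+ s. g s \<partial>noise_factor lam) = (\<integral>\<^sup>+ \<tau>. \<integral>\<^sup>+ u. g (\<tau>, u) \<partial>unif01 \<partial>exp_dist lam)"
proof -
  interpret E: prob_space "exp_dist lam" by (rule prob_space_exp_dist[OF lam])
  interpret U: prob_space unif01 by (rule prob_space_unif01)
  interpret pair_sigma_finite "exp_dist lam" unif01 ..
  show ?thesis using U.nn_integral_fst[of g "exp_dist lam"] g by (simp add: noise_factor_def)
qed

lemma noise_factor_nn_integral_snd:
  assumes lam: "lam > 0" and h[measurable]: "h \<in> borel_measurable borel"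
  shows "(\<integral>\<^sup>+ s. h (snd s) \<partial>noise_factor lam) = (\<integral>\<^sup>+ u. h u \<partial>unif01)"
proof -
  interpret E: prob_space "exp_dist lam" by (rule prob_space_exp_dist[OF lam])
  have "(\<integral>\<^sup>+ s. h (snd s) \<partial>noise_factor lam) = (\<integral>\<^sup>+ \<tau>. \<integral>\<^sup>+ u. h u \<partial>unif01 \<partial>exp_dist lam)"
    by (subst noise_factor_nn_integral[OF lam]) auto
  also have "\<dots> = (\<integral>\<^sup>+ u. h u \<partial>unif01)" using E.emeasure_space_1 by simp
  finally show ?thesis .
qed

lemma noise_factor_nn_integral_fst:
  assumes lam: "lam > 0" and h[measurable]: "h \<in> borel_measurable borel"
  shows "(\<integral>\<^sup>+ s. h (fst s) \<partial>noise_factor lam) = (\<integral>\<^sup>+ \<tau>. h \<tau> \<partial>exp_dist lam)"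
proof -
  interpret U: prob_space unif01 by (rule prob_space_unif01)
  have "(\<integral>\<^sup>+ s. h (fst s) \<partial>noise_factor lam) = (\<integral>\<^sup>+ \<tau>. \<integral>\<^sup>+ u. h \<tau> \<partial>unif01 \<partial>exp_dist lam)"
    by (subst noise_factor_nn_integral[OF lam]) auto
  also have "\<dots> = (\<integral>\<^sup>+ \<tau>. h \<tau> \<partial>exp_dist lam)" using U.emeasure_space_1 by simp
  finally show ?thesis .
qed

lemma exp_dist_mgf:
  assumes lam: "lam > 0" and th: "\<theta> < lam"
  shows "(\<integral>\<^sup>+ \<tau>. ennreal (exp (\<theta> * \<tau>)) \<partial>exp_dist lam) = ennreal (lam / (lam - \<theta>))"
proof -
  have "(\<integral>\<^sup>+ \<tau>. ennreal (exp (\<theta> * \<tau>)) \<partial>exp_dist lam)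
      = (\<integral>\<^sup>+ x. ennreal (exponential_density lam x) * ennreal (exp (\<theta> * x)) \<partial>lborel)"
    unfolding exp_dist_def by (rule nn_integral_density) auto
  also have "\<dots> = (\<integral>\<^sup>+ x. ennreal (lam / (lam - \<theta>)) * ennreal (exponential_density (lam - \<theta>) x) \<partial>lborel)"
  proof (rule nn_integral_cong)
    fix x :: real
    have "exponential_density lam x * exp (\<theta> * x) = lam / (lam - \<theta>) * exponential_density (lam - \<theta>) x"
    proof (cases "x < 0")
      case True then show ?thesis by (simp add: exponential_density_def)
    next
      case False
      have "exp (- x * lam) * exp (\<theta> * x) = exp (- x * (lam - \<theta>))" by (simp add: exp_add[symmetric] algebra_simps)
      then show ?thesis using False th by (simp add: exponential_density_def field_simps)
    qed
    then show "ennreal (exponential_density lam x) * ennreal (exp (\<theta> * x)) = ennreal (lam / (lam - \<theta>)) * ennreal (exponential_density (lam - \<theta>) x)"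
      using lam th by (simp add: ennreal_mult[symmetric] exponential_density_nonneg)
  qed
  also have "\<dots> = ennreal (lam / (lam - \<theta>)) * (\<integral>\<^sup>+ x. ennreal (exponential_density (lam - \<theta>) x) \<partial>lborel)"
    by (rule nn_integral_cmult) auto
  also have "(\<integral>\<^sup>+ x. ennreal (exponential_density (lam - \<theta>) x) \<partial>lborel) = 1"
  proof -
    interpret prob_space "density lborel (\<lambda>x. ennreal (exponential_density (lam - \<theta>) x))"
      using prob_space_exponential_density[of "lam - \<theta>"] th by simp
    have "1 = emeasure (density lborel (\<lambda>x. ennreal (exponential_density (lam - \<theta>) x))) UNIV"
      using emeasure_space_1 by simp
    also have "\<dots> = (\<integral>\<^sup>+ x. ennreal (exponential_density (lam - \<theta>) x) \<partial>lborel)"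
      by (subst emeasure_density) auto
    finally show ?thesis by simp
  qed
  finally show ?thesis by simp
qed

lemma nn_integral_exp_dist_scaled_exp:
  assumes lam: "lam > 0" and th: "\<theta> < lam" and c: "c \<ge> 0"
  shows "(\<integral>\<^sup>+ \<tau>. ennreal (c * exp (A + \<theta> * \<tau>)) \<partial>exp_dist lam) = ennreal (c * exp A * (lam / (lam - \<theta>)))"
proof -
  have "(\<integral>\<^sup>+ \<tau>. ennreal (c * exp (A + \<theta> * \<tau>)) \<partial>exp_dist lam)
      = (\<integral>\<^sup>+ \<tau>. ennreal (c * exp A) * ennreal (exp (\<theta> * \<tau>)) \<partial>exp_dist lam)"
    using c by (intro nn_integral_cong) (simp add: exp_add ennreal_mult mult.assoc)
  also have "\<dots> = ennreal (c * exp A) * ennreal (lam / (lam - \<theta>))"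
    by (simp add: nn_integral_cmult exp_dist_mgf[OF lam th])
  also have "\<dots> = ennreal (c * exp A * (lam / (lam - \<theta>)))"
    by (rule ennreal_mult[symmetric]) (use c lam th in auto)
  finally show ?thesis .
qed

lemma AE_exp_dist_nonneg: "AE \<tau> in exp_dist lam. 0 \<le> \<tau>"
  unfolding exp_dist_def by (subst AE_density) (auto simp: exponential_density_def)

lemma AE_unif01: "AE u in unif01. 0 \<le> u \<and> u < 1"
  unfolding unif01_def
  by (subst AE_uniform_measure) (use AE_lborel_singleton[of "1::real"] in \<open>auto elim!: eventually_mono\<close>)

lemma AE_noise_factor: assumes lam: "lam > 0" shows "AE s in noise_factor lam. 0 \<le> fst s \<and> 0 \<le> snd s \<and> snd s < 1"
proof -
  interpret E: prob_space "exp_dist lam" by (rule prob_space_exp_dist[OF lam])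
  interpret U: prob_space unif01 by (rule prob_space_unif01)
  interpret pair_sigma_finite "exp_dist lam" unif01 ..
  have "AE s in exp_dist lam \<Otimes>\<^sub>M unif01. 0 \<le> fst s \<and> 0 \<le> snd s \<and> snd s < 1"
  proof (rule AE_pair_measure)
    show "{x \<in> space (exp_dist lam \<Otimes>\<^sub>M unif01). 0 \<le> fst x \<and> 0 \<le> snd x \<and> snd x < 1} \<in> sets (exp_dist lam \<Otimes>\<^sub>M unif01)"
      by measurable
    show "AE x in exp_dist lam. AE y in unif01. 0 \<le> fst (x, y) \<and> 0 \<le> snd (x, y) \<and> snd (x, y) < 1"
      using AE_exp_dist_nonneg[of lam] by eventually_elim (use AE_unif01 in auto)
  qed
  then show ?thesis by (simp only: noise_factor_def)
qed

lemma AE_noise_space_valid: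
  assumes lam: "lam > 0"
  shows "AE \<omega> in noise_space lam. \<forall>k. 0 \<le> fst (\<omega> k) \<and> 0 \<le> snd (\<omega> k) \<and> snd (\<omega> k) < 1"
  unfolding noise_space_eq_PiM AE_all_countable
  by (intro allI AE_PiM_component prob_space_noise_factor lam AE_noise_factor) auto

lemma space_noise_space[simp]: "space (noise_space lam) = UNIV"
  unfolding noise_space_eq_PiM by (simp add: space_PiM PiE_UNIV_domain)

lemma prob_space_noise_space: "lam > 0 \<Longrightarrow> prob_space (noise_space lam)"
proof -
  assume lam: "lam > 0"
  interpret prob_space "noise_factor lam" by (rule prob_space_noise_factor[OF lam])
  interpret S: sequence_space "noise_factor lam" ..
  show ?thesis unfolding noise_space_eq_PiM by (rule S.P.prob_space_axioms)
qed

lemma emeasure_noise_space_peel: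
  assumes lam: "lam > 0" and A: "{\<omega>. Q \<omega>} \<in> sets (noise_space lam)"
  shows "emeasure (noise_space lam) {\<omega>. Q \<omega>} =
    (\<integral>\<^sup>+ s. emeasure (noise_space lam) {\<omega>. Q (case_nat s \<omega>)} \<partial>noise_factor lam)"
  using emeasure_noise_space_case_nat[OF lam A] by simp

lemma measure_le_of_emeasure_le:
  assumes "prob_space M" "emeasure M A \<le> ennreal b" "0 \<le> b" shows "measure M A \<le> b"
proof -
  interpret prob_space M by fact
  show ?thesis using assms(2,3) by (simp add: emeasure_eq_measure)
qed

lemma sum_measure_preimage_inter:
  fixes X :: "'a \<Rightarrow> 'v::finite"
  assumes "finite_measure M" and [measurable]: "X \<in> measurable M (count_space UNIV)" "D \<in> sets M"
  shows "(\<Sum>w\<in>UNIV. measure M ({\<omega>\<in>space M. X \<omega> = w} \<inter> D)) = measure M D"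
proof -
  interpret finite_measure M by fact
  have "D = (\<Union>w\<in>UNIV. {\<omega>\<in>space M. X \<omega> = w} \<inter> D)"
    using sets.sets_into_space[of D M] by auto
  also have "measure M \<dots> = (\<Sum>w\<in>UNIV. measure M ({\<omega>\<in>space M. X \<omega> = w} \<inter> D))"
    by (rule finite_measure_finite_Union) (auto simp: disjoint_family_on_def)
  finally show ?thesis by simp
qed

lemma tv_le_coupling:
  fixes X Y :: "'a \<Rightarrow> 'v::finite"
  assumes M: "prob_space M" and X[measurable]: "X \<in> measurable M (count_space UNIV)"
    and Y[measurable]: "Y \<in> measurable M (count_space UNIV)"
  shows "(\<Sum>w\<in>UNIV. \<bar>measure M {\<omega>\<in>space M. X \<omega> = w} - measure M {\<omega>\<in>space M. Y \<omega> = w}\<bar>)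
    \<le> 2 * measure M {\<omega>\<in>space M. X \<omega> \<noteq> Y \<omega>}"
proof -
  interpret prob_space M by fact
  define A where "A w = {\<omega>\<in>space M. X \<omega> = w}" for w
  define B where "B w = {\<omega>\<in>space M. Y \<omega> = w}" for w
  define D where "D = {\<omega>\<in>space M. X \<omega> \<noteq> Y \<omega>}"
  have [measurable]: "A w \<in> sets M" "B w \<in> sets M" "D \<in> sets M" for w
    unfolding A_def B_def D_def by measurable
  have split: "measure M (A w) = measure M (A w \<inter> B w) + measure M (A w \<inter> D)"
    "measure M (B w) = measure M (A w \<inter> B w) + measure M (B w \<inter> D)" for w
    by (subst finite_measure_Union[symmetric]; auto intro!: arg_cong[where f="measure M"] simp: A_def B_def D_def)+
  have "(\<Sum>w\<in>UNIV. \<bar>measure M (A w) - measure M (B w)\<bar>)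
      \<le> (\<Sum>w\<in>UNIV. measure M (A w \<inter> D) + measure M (B w \<inter> D))"
    unfolding split by (intro sum_mono) (simp add: abs_le_iff)
  also have "\<dots> = 2 * measure M D"
    unfolding sum.distrib A_def B_def
    using sum_measure_preimage_inter[of M X D] sum_measure_preimage_inter[of M Y D] finite_measure_axioms
    by simp
  finally show ?thesis unfolding A_def B_def D_def .
qed

lemma tv_norm_triangle:
  "tv_norm (\<lambda>w. f w - h w) \<le> tv_norm (\<lambda>w. f w - g w) + tv_norm (\<lambda>w. g w - h w)"
  unfolding tv_norm_def sum.distrib[symmetric] by (rule sum_mono) linarith

lemma enum_states_distinct_UNIV: "distinct (enum_states::'v::finite list) \<and> set (enum_states::'v list) = UNIV"
  unfolding enum_states_def by (rule someI_ex) (use finite_distinct_list[of "UNIV::'v set"] in auto)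

lemma length_enum_states: "length (enum_states :: 'v::finite list) = card (UNIV :: 'v set)"
  using enum_states_distinct_UNIV[where 'v='v] distinct_card by metis

lemma length_enum_states_pos: "length (enum_states :: 'v::finite list) > 0"
  unfolding length_enum_states by simp

lemma sum_enum_states:
  fixes f :: "'v::finite \<Rightarrow> 'a::comm_monoid_add"
  shows "(\<Sum>j<length (enum_states :: 'v list). f (enum_states ! j)) = (\<Sum>v\<in>UNIV. f v)"
proof -
  have "(\<Sum>j<length (enum_states :: 'v list). f (enum_states ! j)) = sum_list (map f (enum_states :: 'v list))"
    by (simp add: sum_list_sum_nth atLeast0LessThan)
  also have "\<dots> = sum f (set (enum_states :: 'v list))"
    using enum_states_distinct_UNIV[where 'v='v] by (simp add: sum_list_distinct_conv_sum_set)
  finally show ?thesis using enum_states_distinct_UNIV[where 'v='v] by simp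
qed

definition cdf_enum :: "('v::finite \<Rightarrow> real) \<Rightarrow> nat \<Rightarrow> real" where
  "cdf_enum p i = (\<Sum>j<i. p (enum_states ! j))"

lemma cdf_enum_mono: "(\<And>v. p v \<ge> 0) \<Longrightarrow> j \<le> k \<Longrightarrow> cdf_enum p j \<le> cdf_enum p k"
  unfolding cdf_enum_def by (rule sum_mono2) auto

lemma cdf_enum_nonneg: "(\<And>v. p v \<ge> 0) \<Longrightarrow> cdf_enum p j \<ge> 0"
  unfolding cdf_enum_def by (rule sum_nonneg) auto

lemma cdf_enum_length: fixes p :: "'v::finite \<Rightarrow> real" shows "cdf_enum p (length (enum_states :: 'v::finite list)) = (\<Sum>v\<in>UNIV. p v)"
  unfolding cdf_enum_def by (rule sum_enum_states)

lemma cdf_enum_Suc: "cdf_enum p (Suc i) = cdf_enum p i + p (enum_states ! i)"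
  unfolding cdf_enum_def by simp

definition choose_index :: "('v::finite \<Rightarrow> real) \<Rightarrow> real \<Rightarrow> nat" where
  "choose_index p u = (LEAST k. Suc k = length (enum_states :: 'v list) \<or> u < cdf_enum p (Suc k))"

lemma choose_state_eq_index: "choose_state p u = enum_states ! choose_index p u"
  unfolding choose_state_def choose_index_def Let_def cdf_enum_def by (simp add: lessThan_Suc_atMost)

lemma choose_index_less:
  fixes p :: "'v::finite \<Rightarrow> real"
  shows "choose_index p u < length (enum_states :: 'v list)"
proof -
  have "Suc (length (enum_states :: 'v list) - 1) = length (enum_states :: 'v list)"
    using length_enum_states_pos[where 'v='v] by simp
  then have "choose_index p u \<le> length (enum_states :: 'v list) - 1"
    unfolding choose_index_def by (intro Least_le) simp
  then show ?thesis
    using length_enum_states_pos[where 'v='v] by linarith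
qed

lemma Least_cong_upto:
  fixes P Q :: "nat \<Rightarrow> bool"
  assumes "P n" and agree: "\<And>k. k \<le> n \<Longrightarrow> P k \<longleftrightarrow> Q k"
  shows "(LEAST k. P k) = (LEAST k. Q k)"
proof (rule Least_equality)
  have "Q n" using assms by simp
  then show "P (LEAST k. Q k)"
    using LeastI[of Q n] Least_le[of Q n] agree by auto
  show "(LEAST k. Q k) \<le> m" if "P m" for m
    using that \<open>Q n\<close> agree[of m] Least_le[of Q m] Least_le[of Q n] by (cases "m \<le> n") auto
qed

lemma choose_index_eq_iff:
  fixes p :: "'v::finite \<Rightarrow> real"
  assumes nn: "\<And>v. p v \<ge> 0" and s1: "(\<Sum>v\<in>UNIV. p v) = 1" and u: "0 \<le> u" "u < 1"
    and i: "i < length (enum_states::'v list)"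
  shows "choose_index p u = i \<longleftrightarrow> cdf_enum p i \<le> u \<and> u < cdf_enum p (Suc i)"
proof -
  define Pr where "Pr k \<longleftrightarrow> Suc k = length (enum_states::'v list) \<or> u < cdf_enum p (Suc k)" for k
  have Pr_iff: "Pr k \<longleftrightarrow> u < cdf_enum p (Suc k)" if "k < length (enum_states::'v list)" for k
    using that u cdf_enum_length[of p] s1 by (auto simp: Pr_def)
  have ex: "Pr i" if "cdf_enum p i \<le> u \<and> u < cdf_enum p (Suc i)"
    using that Pr_iff i by blast
  show ?thesis
    unfolding choose_index_def Pr_def[symmetric]
  proof
    assume m: "(LEAST k. Pr k) = i"
    have "Pr (length (enum_states::'v list) - 1)"
      using length_enum_states_pos[where 'v='v] by (simp add: Pr_def)
    then have "u < cdf_enum p (Suc i)"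
      using LeastI[of Pr] m Pr_iff i by blast
    moreover have "cdf_enum p i \<le> u"
    proof (cases i)
      case (Suc j)
      then show ?thesis using not_less_Least[of j Pr] m Pr_iff[of j] i by simp
    qed (use u in \<open>simp add: cdf_enum_def\<close>)
    ultimately show "cdf_enum p i \<le> u \<and> u < cdf_enum p (Suc i)" by simp
  next
    assume a: "cdf_enum p i \<le> u \<and> u < cdf_enum p (Suc i)"
    show "(LEAST k. Pr k) = i"
    proof (rule Least_equality)
      show "Pr i" by (rule ex[OF a])
      show "i \<le> y" if "Pr y" for y
        using that a i Pr_iff[of y] cdf_enum_mono[of p "Suc y" i, OF nn] by (cases "i \<le> y") auto
    qed
  qed
qed

lemma choose_state_eq_nth_iff:
  fixes p :: "'v::finite \<Rightarrow> real"
  assumes nn: "\<And>v. p v \<ge> 0" and s1: "(\<Sum>v\<in>UNIV. p v) = 1" and u: "0 \<le> u" "u < 1"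
    and i: "i < length (enum_states::'v list)"
  shows "choose_state p u = enum_states ! i \<longleftrightarrow> cdf_enum p i \<le> u \<and> u < cdf_enum p (Suc i)"
  unfolding choose_state_eq_index choose_index_eq_iff[OF assms, symmetric]
  using nth_eq_iff_index_eq[OF conjunct1[OF enum_states_distinct_UNIV] choose_index_less i] .

lemma stochastic_vector_point_mass:
  fixes p :: "'v::finite \<Rightarrow> real"
  assumes nn: "\<And>v. p v \<ge> 0" and s1: "(\<Sum>v\<in>UNIV. p v) = 1" and pe: "p e = 1"
  shows "w \<noteq> e \<Longrightarrow> p w = 0"
proof -
  have "(\<Sum>v\<in>UNIV. p v) = p e + (\<Sum>v\<in>UNIV - {e}. p v)"
    by (simp add: sum.remove)
  then have "(\<Sum>v\<in>UNIV - {e}. p v) = 0" using s1 pe by simp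
  then have "\<forall>v\<in>UNIV - {e}. p v = 0" using nn by (subst (asm) sum_nonneg_eq_0_iff) auto
  then show "w \<noteq> e \<Longrightarrow> p w = 0" by auto
qed

lemma choose_state_point_mass:
  fixes p :: "'v::finite \<Rightarrow> real"
  assumes nn: "\<And>v. p v \<ge> 0" and s1: "(\<Sum>v\<in>UNIV. p v) = 1" and pe: "p e = 1"
    and u: "0 \<le> u" "u < 1"
  shows "choose_state p u = e"
proof -
  obtain i where i: "i < length (enum_states::'v list)" "enum_states ! i = e"
    using enum_states_distinct_UNIV[where 'v='v] by (metis UNIV_I in_set_conv_nth)
  have z: "p w = 0" if "w \<noteq> e" for w using stochastic_vector_point_mass[OF nn s1 pe that] .
  have "cdf_enum p i = 0" unfolding cdf_enum_def
  proof (rule sum.neutral, rule ballI)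
    fix j assume "j \<in> {..<i}"
    then have "enum_states ! j \<noteq> (enum_states ! i :: 'v)"
      using nth_eq_iff_index_eq[of "enum_states::'v list" j i] enum_states_distinct_UNIV[where 'v='v] i by auto
    then show "p (enum_states ! j) = 0" using z i by auto
  qed
  then have "cdf_enum p i \<le> u \<and> u < cdf_enum p (Suc i)" using cdf_enum_Suc[of p i] i pe u by simp
  then show ?thesis using choose_state_eq_nth_iff[OF nn s1 u i(1)] i by simp
qed

lemma measurable_choose_state[measurable]:
  fixes p :: "'a \<Rightarrow> 'v::finite \<Rightarrow> real"
  assumes [measurable]: "\<And>v. (\<lambda>\<omega>. p \<omega> v) \<in> borel_measurable N" and [measurable]: "U \<in> borel_measurable N"
  shows "(\<lambda>\<omega>. choose_state (p \<omega>) (U \<omega>)) \<in> measurable N (count_space UNIV)"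
proof -
  have "(\<lambda>\<omega>. choose_index (p \<omega>) (U \<omega>)) \<in> measurable N (count_space UNIV)"
    unfolding choose_index_def cdf_enum_def by measurable
  then show ?thesis
    unfolding choose_state_eq_index by (rule measurable_compose) simp
qed

lemma emeasure_unif01: "A \<in> sets borel \<Longrightarrow> emeasure unif01 A = emeasure lborel ({0..1} \<inter> A)"
  unfolding unif01_def by (subst emeasure_uniform_measure) (auto simp: divide_ennreal_def)

lemma emeasure_unif01_choose_state:
  fixes p :: "'v::finite \<Rightarrow> real"
  assumes nn: "\<And>v. p v \<ge> 0" and s1: "(\<Sum>v\<in>UNIV. p v) = 1"
  shows "emeasure unif01 {u. choose_state p u = v} = ennreal (p v)"
proof -
  obtain i where i: "i < length (enum_states::'v list)" "enum_states ! i = v"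
    using enum_states_distinct_UNIV[where 'v='v] by (metis UNIV_I in_set_conv_nth)
  define S where "S = {u. choose_state p u = v}"
  have Sm: "S \<in> sets borel" unfolding S_def by measurable
  have DS: "cdf_enum p (Suc i) \<le> 1"
    using cdf_enum_mono[of p, OF nn, of "Suc i" "length (enum_states::'v list)"] i cdf_enum_length[of p] s1 by simp
  have D0: "0 \<le> cdf_enum p i" by (rule cdf_enum_nonneg[OF nn])
  have Dle: "cdf_enum p i \<le> cdf_enum p (Suc i)" by (rule cdf_enum_mono[OF nn]) simp
  have sub1: "{cdf_enum p i..<cdf_enum p (Suc i)} \<subseteq> {0..1} \<inter> S"
  proof
    fix u assume "u \<in> {cdf_enum p i..<cdf_enum p (Suc i)}"
    then have "0 \<le> u" "u < 1" "cdf_enum p i \<le> u \<and> u < cdf_enum p (Suc i)" using D0 DS by auto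
    then show "u \<in> {0..1} \<inter> S" using choose_state_eq_nth_iff[OF nn s1 _ _ i(1)] i unfolding S_def by auto
  qed
  have sub2: "{0..1} \<inter> S \<subseteq> {cdf_enum p i..<cdf_enum p (Suc i)} \<union> {1}"
  proof
    fix u assume u: "u \<in> {0..1} \<inter> S"
    show "u \<in> {cdf_enum p i..<cdf_enum p (Suc i)} \<union> {1}"
    proof (cases "u = 1")
      case False
      then have "0 \<le> u" "u < 1" using u by auto
      then show ?thesis using choose_state_eq_nth_iff[OF nn s1 _ _ i(1)] i u unfolding S_def by auto
    qed simp
  qed
  have "emeasure lborel {cdf_enum p i..<cdf_enum p (Suc i)} \<le> emeasure lborel ({0..1} \<inter> S)"
    using sub1 Sm by (intro emeasure_mono) auto
  moreover have "emeasure lborel ({0..1} \<inter> S) \<le> emeasure lborel ({cdf_enum p i..<cdf_enum p (Suc i)} \<union> {1})"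
    using sub2 by (intro emeasure_mono) auto
  moreover have "emeasure lborel ({cdf_enum p i..<cdf_enum p (Suc i)} \<union> {1}) \<le> emeasure lborel {cdf_enum p i..<cdf_enum p (Suc i)} + emeasure lborel {1::real}"
    by (rule emeasure_subadditive) auto
  moreover have "emeasure lborel {cdf_enum p i..<cdf_enum p (Suc i)} = ennreal (p v)"
    using Dle i cdf_enum_Suc[of p i] by simp
  ultimately have "emeasure lborel ({0..1} \<inter> S) = ennreal (p v)" by (simp add: antisym)
  then show ?thesis using emeasure_unif01[OF Sm] unfolding S_def by simp
qed

lemma choose_state_differ_cdf:
  fixes p q :: "'v::finite \<Rightarrow> real"
  assumes "choose_state p u \<noteq> choose_state q u"
  shows "\<exists>i<length (enum_states::'v list). (u < cdf_enum p (Suc i)) \<noteq> (u < cdf_enum q (Suc i))"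
proof (rule ccontr)
  assume agree: "\<not> ?thesis"
  then have "choose_index p u = choose_index q u"
    unfolding choose_index_def
  proof (intro Least_cong_upto[where n="length (enum_states::'v list) - 1"])
    fix k assume "k \<le> length (enum_states::'v list) - 1"
    then have "k < length (enum_states::'v list)"
      using length_enum_states_pos[where 'v='v] by linarith
    then show "(Suc k = length (enum_states::'v list) \<or> u < cdf_enum p (Suc k))
        \<longleftrightarrow> (Suc k = length (enum_states::'v list) \<or> u < cdf_enum q (Suc k))"
      using agree by auto
  qed (use length_enum_states_pos[where 'v='v] in simp)
  then show False
    using assms by (simp add: choose_state_eq_index)
qed

lemma cdf_enum_diff_le:
  fixes p q :: "'v::finite \<Rightarrow> real"
  assumes that: "i < length (enum_states::'v list)"
  shows "\<bar>cdf_enum p (Suc i) - cdf_enum q (Suc i)\<bar> \<le> (\<Sum>v\<in>UNIV. \<bar>p v - q v\<bar>)"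
proof -
  have "\<bar>cdf_enum p (Suc i) - cdf_enum q (Suc i)\<bar> = \<bar>\<Sum>j<Suc i. p (enum_states ! j) - q (enum_states ! j)\<bar>"
    unfolding cdf_enum_def by (simp add: sum_subtractf)
  also have "\<dots> \<le> (\<Sum>j<Suc i. \<bar>p (enum_states ! j) - q (enum_states ! j)\<bar>)" by (rule sum_abs)
  also have "\<dots> \<le> (\<Sum>j<length (enum_states::'v list). \<bar>p (enum_states ! j) - q (enum_states ! j)\<bar>)"
    by (rule sum_mono2) (use that in auto)
  also have "\<dots> = (\<Sum>v\<in>UNIV. \<bar>p v - q v\<bar>)" by (rule sum_enum_states)
  finally show ?thesis .
qed

lemma emeasure_unif01_choose_state_differ:
  fixes p q :: "'v::finite \<Rightarrow> real"
  shows "emeasure unif01 {u. choose_state p u \<noteq> choose_state q u}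
     \<le> ennreal (real (card (UNIV::'v set)) * (\<Sum>v\<in>UNIV. \<bar>p v - q v\<bar>))"
proof -
  define L where "L = length (enum_states::'v list)"
  define A where "A i = {min (cdf_enum p (Suc i)) (cdf_enum q (Suc i))..<max (cdf_enum p (Suc i)) (cdf_enum q (Suc i))}" for i
  have sub: "{u. choose_state p u \<noteq> choose_state q u} \<subseteq> (\<Union>i\<in>{..<L}. A i)"
  proof
    fix u assume "u \<in> {u. choose_state p u \<noteq> choose_state q u}"
    then obtain i where "i < L" "(u < cdf_enum p (Suc i)) \<noteq> (u < cdf_enum q (Suc i))"
      using choose_state_differ_cdf[of p u q] unfolding L_def by auto
    then show "u \<in> (\<Union>i\<in>{..<L}. A i)" unfolding A_def by (intro UN_I[of i]) (auto simp: min_def max_def)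
  qed
  have "emeasure unif01 {u. choose_state p u \<noteq> choose_state q u} \<le> emeasure unif01 (\<Union>i\<in>{..<L}. A i)"
    using sub unfolding A_def by (intro emeasure_mono) auto
  also have "\<dots> \<le> (\<Sum>i<L. emeasure unif01 (A i))"
    by (rule emeasure_subadditive_finite) (auto simp: A_def)
  also have "\<dots> \<le> (\<Sum>i<L. ennreal (\<Sum>v\<in>UNIV. \<bar>p v - q v\<bar>))"
  proof (rule sum_mono)
    fix i assume i: "i \<in> {..<L}"
    have "emeasure unif01 (A i) = emeasure lborel ({0..1} \<inter> A i)"
      by (rule emeasure_unif01) (simp add: A_def)
    also have "\<dots> \<le> emeasure lborel (A i)" by (rule emeasure_mono) (auto simp: A_def)
    also have "\<dots> = ennreal \<bar>cdf_enum p (Suc i) - cdf_enum q (Suc i)\<bar>"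
      unfolding A_def by (simp add: max_def min_def)
    also have "\<dots> \<le> ennreal (\<Sum>v\<in>UNIV. \<bar>p v - q v\<bar>)"
      using cdf_enum_diff_le[of i p q] i unfolding L_def by (intro ennreal_leI) auto
    finally show "emeasure unif01 (A i) \<le> ennreal (\<Sum>v\<in>UNIV. \<bar>p v - q v\<bar>)" .
  qed
  also have "\<dots> = ennreal (real L * (\<Sum>v\<in>UNIV. \<bar>p v - q v\<bar>))"
    by (simp add: ennreal_of_nat_eq_real_of_nat ennreal_mult)
  finally show ?thesis unfolding L_def length_enum_states .
qed

lemma nn_integral_choose_state:
  fixes p g :: "'v::finite \<Rightarrow> real"
  assumes lam: "lam > 0" and nn: "\<And>v. p v \<ge> 0" and s1: "(\<Sum>v\<in>UNIV. p v) = 1" and g: "\<And>v. g v \<ge> 0"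
  shows "(\<integral>\<^sup>+ s. ennreal (g (choose_state p (snd s))) \<partial>noise_factor lam) = ennreal (\<Sum>v\<in>UNIV. p v * g v)"
proof -
  have "(\<integral>\<^sup>+ s. ennreal (g (choose_state p (snd s))) \<partial>noise_factor lam)
      = (\<integral>\<^sup>+ u. ennreal (g (choose_state p u)) \<partial>unif01)"
    by (rule noise_factor_nn_integral_snd[OF lam]) measurable
  also have "\<dots> = (\<integral>\<^sup>+ u. (\<Sum>v\<in>UNIV. ennreal (g v) * indicator {u. choose_state p u = v} u) \<partial>unif01)"
  proof (rule nn_integral_cong)
    fix u
    have "(\<Sum>v\<in>UNIV. ennreal (g v) * indicator {u. choose_state p u = v} u)
        = (\<Sum>v\<in>{choose_state p u}. ennreal (g v) * indicator {u. choose_state p u = v} u)"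
      by (rule sum.mono_neutral_right) auto
    then show "ennreal (g (choose_state p u)) = (\<Sum>v\<in>UNIV. ennreal (g v) * indicator {u. choose_state p u = v} u)"
      by simp
  qed
  also have "\<dots> = (\<Sum>v\<in>UNIV. ennreal (g v) * emeasure unif01 {u. choose_state p u = v})"
    by (subst nn_integral_sum) (auto intro!: sum.cong nn_integral_cmult_indicator)
  also have "\<dots> = (\<Sum>v\<in>UNIV. ennreal (p v * g v))"
    using nn g by (simp add: emeasure_unif01_choose_state[OF nn s1] ennreal_mult mult.commute)
  also have "\<dots> = ennreal (\<Sum>v\<in>UNIV. p v * g v)"
    using nn g by (intro sum_ennreal) auto
  finally show ?thesis .
qed

lemma mpow_add: "mpow p (m + n) v w = (\<Sum>u\<in>UNIV. mpow p m v u * mpow p n u w)"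
proof (induction n arbitrary: w)
  case 0 then show ?case by (simp add: if_distrib cong: if_cong)
next
  case (Suc n)
  have "mpow p (m + Suc n) v w = (\<Sum>u\<in>UNIV. mpow p (m + n) v u * p u w)" by simp
  also have "\<dots> = (\<Sum>u\<in>UNIV. (\<Sum>u'\<in>UNIV. mpow p m v u' * mpow p n u' u) * p u w)"
    using Suc by simp
  also have "\<dots> = (\<Sum>u'\<in>UNIV. mpow p m v u' * (\<Sum>u\<in>UNIV. mpow p n u' u * p u w))"
    by (simp add: sum_distrib_left sum_distrib_right mult.assoc) (rule sum.swap)
  also have "\<dots> = (\<Sum>u'\<in>UNIV. mpow p m v u' * mpow p (Suc n) u' w)" by simp
  finally show ?case .
qed

lemma sum_delta_mult: fixes v :: "'v::finite" shows "(\<Sum>u\<in>UNIV. (if v = u then 1 else 0) * f u) = (f v :: real)"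
proof -
  have "(\<Sum>u\<in>UNIV. (if v = u then 1 else 0) * f u) = (\<Sum>u\<in>UNIV. if v = u then f u else 0)"
    by (rule sum.cong) auto
  also have "\<dots> = f v" by (simp add: sum.delta')
  finally show ?thesis .
qed

lemma mpow_1: "mpow p (Suc 0) v w = p v w"
  by (simp add: sum_delta_mult)

lemma mpow_first: "mpow p (Suc n) v w = (\<Sum>u\<in>UNIV. p v u * mpow p n u w)"
  using mpow_add[of p "Suc 0" n v w] by (simp only: add_Suc add_0 mpow_1)

lemma mpow_nonneg: "(\<And>v w. p v w \<ge> 0) \<Longrightarrow> mpow p n v w \<ge> 0"
  by (induction n arbitrary: w) (auto intro!: sum_nonneg mult_nonneg_nonneg)

definition transient_prob :: "('v::finite \<Rightarrow> 'v \<Rightarrow> real) \<Rightarrow> 'v set \<Rightarrow> nat \<Rightarrow> 'v \<Rightarrow> real" where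
  "transient_prob p E n v = (\<Sum>w\<in>UNIV - E. mpow p n v w)"

lemma transient_prob_add: "transient_prob p E (j + n) v = (\<Sum>u\<in>UNIV. mpow p j v u * transient_prob p E n u)"
  unfolding transient_prob_def mpow_add by (simp add: sum_distrib_left) (rule sum.swap)

context
  fixes p :: "'v::finite \<Rightarrow> 'v \<Rightarrow> real" and E :: "'v set"
  assumes nn: "\<And>v w. p v w \<ge> 0" and s1: "\<And>v. (\<Sum>w\<in>UNIV. p v w) = 1"
    and ab: "\<And>e. e \<in> E \<Longrightarrow> p e e = 1"
begin

lemma mpow_sum1: "(\<Sum>w\<in>UNIV. mpow p n v w) = 1"
proof (induction n)
  case 0 then show ?case by simp
next
  case (Suc n)
  have "(\<Sum>w\<in>UNIV. mpow p (Suc n) v w) = (\<Sum>u\<in>UNIV. mpow p n v u * (\<Sum>w\<in>UNIV. p u w))"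
    by (simp add: sum_distrib_left) (rule sum.swap)
  also have "\<dots> = 1" using Suc s1 by simp
  finally show ?case .
qed

lemma mpow_le1: "mpow p n v w \<le> 1"
proof -
  have "mpow p n v w \<le> (\<Sum>w\<in>UNIV. mpow p n v w)"
    by (rule member_le_sum) (auto intro: mpow_nonneg[of p, OF nn])
  then show ?thesis using mpow_sum1 by simp
qed

lemma absorbing_row: "e \<in> E \<Longrightarrow> w \<noteq> e \<Longrightarrow> p e w = 0"
  using stochastic_vector_point_mass[of "p e" e w] nn s1 ab by auto

lemma mpow_absorbing: "e \<in> E \<Longrightarrow> mpow p n e w = (if e = w then 1 else 0)"
proof (induction n arbitrary: w)
  case 0 then show ?case by simp
next
  case (Suc n)
  have "mpow p (Suc n) e w = (\<Sum>u\<in>UNIV. (if e = u then 1 else 0) * p u w)" using Suc by simp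
  also have "\<dots> = p e w" by (rule sum_delta_mult)
  also have "\<dots> = (if e = w then 1 else 0)" using absorbing_row[OF Suc.prems] ab[OF Suc.prems] by auto
  finally show ?case .
qed

lemma transient_prob_nonneg: "transient_prob p E n v \<ge> 0"
  unfolding transient_prob_def by (intro sum_nonneg mpow_nonneg[of p, OF nn])

lemma transient_prob_le_1: "transient_prob p E n v \<le> 1"
proof -
  have "transient_prob p E n v \<le> (\<Sum>w\<in>UNIV. mpow p n v w)"
    unfolding transient_prob_def by (rule sum_mono2) (auto intro: mpow_nonneg[of p, OF nn])
  then show ?thesis using mpow_sum1 by simp
qed

lemma transient_prob_absorbing: "u \<in> E \<Longrightarrow> transient_prob p E n u = 0"
  unfolding transient_prob_def using mpow_absorbing by (intro sum.neutral) auto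

lemma transient_prob_decay:
  assumes z: "\<And>v. transient_prob p E n0 v \<le> z"
  shows "transient_prob p E (j + n0) v \<le> z * transient_prob p E j v"
proof -
  have "transient_prob p E (j + n0) v = (\<Sum>u\<in>UNIV. mpow p j v u * transient_prob p E n0 u)" by (rule transient_prob_add)
  also have "\<dots> = (\<Sum>u\<in>UNIV - E. mpow p j v u * transient_prob p E n0 u)"
    by (rule sum.mono_neutral_right) (auto simp: transient_prob_absorbing)
  also have "\<dots> \<le> (\<Sum>u\<in>UNIV - E. mpow p j v u * z)"
    by (intro sum_mono mult_left_mono z mpow_nonneg[of p, OF nn])
  also have "\<dots> = z * transient_prob p E j v" unfolding transient_prob_def by (simp add: sum_distrib_left mult.commute)
  finally show ?thesis .
qed

lemma transient_prob_power_bound: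
  assumes z: "\<And>v. transient_prob p E n0 v \<le> z" and z0: "0 \<le> z"
  shows "transient_prob p E (q * n0 + r) v \<le> z ^ q"
proof (induction q arbitrary: v)
  case 0 then show ?case using transient_prob_le_1 by simp
next
  case (Suc q)
  have "transient_prob p E (Suc q * n0 + r) v = transient_prob p E ((q * n0 + r) + n0) v" by (simp add: algebra_simps)
  also have "\<dots> \<le> z * transient_prob p E (q * n0 + r) v" by (rule transient_prob_decay[OF z])
  also have "\<dots> \<le> z * z ^ q" by (intro mult_left_mono Suc z0)
  finally show ?case by simp
qed

lemma transient_prob_geometric:
  assumes z: "\<And>v. transient_prob p E n0 v \<le> z" and z0: "0 < z" "z < 1" and n0: "n0 \<ge> 1"
  shows "transient_prob p E k v \<le> root n0 z ^ k / z"
proof -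
  define \<rho> where "\<rho> = root n0 z"
  have \<rho>: "0 \<le> \<rho>" "\<rho> \<le> 1" "\<rho> ^ n0 = z"
    using z0 n0 by (auto simp: \<rho>_def real_root_pow_pos2)
  have "z ^ (k div n0) * z \<le> z ^ (k div n0) * \<rho> ^ (k mod n0)"
    using \<rho> n0 z0 by (intro mult_left_mono) (auto intro!: power_decreasing[of "k mod n0" n0, simplified \<rho>(3)])
  also have "\<dots> = \<rho> ^ k"
    by (metis \<rho>(3) div_mult_mod_eq power_add power_mult mult.commute)
  finally have "z ^ (k div n0) \<le> \<rho> ^ k / z"
    using z0 by (simp add: field_simps)
  then show ?thesis
    using transient_prob_power_bound[OF z less_imp_le[OF z0(1)], of "k div n0" "k mod n0" v] unfolding \<rho>_def by simp
qed

lemma absorb_prob_limit: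
  assumes e: "e \<in> E"
  shows "(\<lambda>n. mpow p n v e) \<longlonglongrightarrow> absorb_prob p v e" and "mpow p n v e \<le> absorb_prob p v e"
proof -
  have inc: "incseq (\<lambda>n. mpow p n v e)"
  proof (rule incseq_SucI)
    fix n
    have "mpow p n v e * p e e \<le> (\<Sum>u\<in>UNIV. mpow p n v u * p u e)"
      by (rule member_le_sum) (auto intro: mult_nonneg_nonneg mpow_nonneg[of p, OF nn] nn)
    then show "mpow p n v e \<le> mpow p (Suc n) v e" using ab[OF e] by simp
  qed
  obtain L where L: "(\<lambda>n. mpow p n v e) \<longlonglongrightarrow> L" "\<And>i. mpow p i v e \<le> L"
    using incseq_convergent[OF inc, of 1] mpow_le1 by blast
  have "absorb_prob p v e = L" unfolding absorb_prob_def using L(1) by (rule limI)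
  then show "(\<lambda>n. mpow p n v e) \<longlonglongrightarrow> absorb_prob p v e" "mpow p n v e \<le> absorb_prob p v e"
    using L by auto
qed

lemma transient_prob_tendsto_0:
  assumes z: "\<And>v. transient_prob p E n0 v \<le> z" and z0: "0 < z" "z < 1" and n0: "n0 \<ge> 1"
  shows "(\<lambda>n. transient_prob p E n v) \<longlonglongrightarrow> 0"
proof (rule tendsto_sandwich[of "\<lambda>_. 0" _ _ "\<lambda>n. root n0 z ^ n / z"])
  show "\<forall>\<^sub>F n in sequentially. 0 \<le> transient_prob p E n v"
    by (simp add: transient_prob_nonneg)
  show "\<forall>\<^sub>F n in sequentially. transient_prob p E n v \<le> root n0 z ^ n / z"
    using transient_prob_geometric[OF z z0 n0] by simp
  have "(\<lambda>n. root n0 z ^ n) \<longlonglongrightarrow> 0"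
    using z0 n0 by (intro LIMSEQ_power_zero) (simp_all add: real_root_lt_1_iff)
  then show "(\<lambda>n. root n0 z ^ n / z) \<longlonglongrightarrow> 0"
    using tendsto_divide_zero by blast
qed simp

lemma sum_mpow_absorbing: "(\<Sum>e\<in>E. mpow p n v e) = 1 - transient_prob p E n v"
proof -
  have "(\<Sum>w\<in>UNIV. mpow p n v w) = (\<Sum>e\<in>E. mpow p n v e) + (\<Sum>w\<in>UNIV - E. mpow p n v w)"
    using sum.subset_diff[of E UNIV] by (simp add: add.commute)
  then show ?thesis using mpow_sum1 unfolding transient_prob_def by simp
qed

lemma sum_absorb_prob:
  assumes z: "\<And>v. transient_prob p E n0 v \<le> z" and z0: "0 < z" "z < 1" and n0: "n0 \<ge> 1"
  shows "(\<Sum>e\<in>E. absorb_prob p v e) = 1"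
proof -
  have "(\<lambda>n. \<Sum>e\<in>E. mpow p n v e) \<longlonglongrightarrow> (\<Sum>e\<in>E. absorb_prob p v e)"
    by (intro tendsto_sum absorb_prob_limit) auto
  moreover have "(\<lambda>n. \<Sum>e\<in>E. mpow p n v e) \<longlonglongrightarrow> 1 - 0"
    unfolding sum_mpow_absorbing by (intro tendsto_diff tendsto_const transient_prob_tendsto_0[OF z z0 n0])
  ultimately show ?thesis using LIMSEQ_unique by fastforce
qed

lemma tv_mpow_absorb_prob:
  assumes z: "\<And>v. transient_prob p E n0 v \<le> z" and z0: "0 < z" "z < 1" and n0: "n0 \<ge> 1"
  shows "(\<Sum>w\<in>UNIV. \<bar>mpow p m v w - (if w \<in> E then absorb_prob p v w else 0)\<bar>) = 2 * transient_prob p E m v"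
proof -
  have "(\<Sum>w\<in>E. \<bar>mpow p m v w - absorb_prob p v w\<bar>) = (\<Sum>w\<in>E. absorb_prob p v w - mpow p m v w)"
    using absorb_prob_limit(2) by (intro sum.cong refl) auto
  also have "\<dots> = transient_prob p E m v"
    using sum_absorb_prob[OF z z0 n0] sum_mpow_absorbing by (simp add: sum_subtractf)
  finally have "(\<Sum>w\<in>E. \<bar>mpow p m v w - absorb_prob p v w\<bar>) = transient_prob p E m v" .
  moreover have "(\<Sum>w\<in>UNIV - E. \<bar>mpow p m v w\<bar>) = transient_prob p E m v"
    unfolding transient_prob_def using mpow_nonneg[of p, OF nn] by simp
  ultimately show ?thesis
    using sum.subset_diff[of E UNIV "\<lambda>w. \<bar>mpow p m v w - (if w \<in> E then absorb_prob p v w else 0)\<bar>"]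
    by simp
qed

end

lemma l1norm_le_card_norm: "l1norm (x::real^'n) \<le> real CARD('n) * norm x"
proof -
  have "l1norm x \<le> (\<Sum>i\<in>(UNIV::'n set). norm x)" unfolding l1norm_def by (intro sum_mono component_le_norm_cart)
  then show ?thesis by simp
qed

lemma l1norm_triangle: "l1norm (x + y) \<le> l1norm x + l1norm y"
  unfolding l1norm_def by (simp add: sum.distrib[symmetric] sum_mono abs_triangle_ineq)

(* Driven by the same uniforms as jump_state: this is the coupling of the whole argument. *)
fun frozen_chain :: "('v::finite \<Rightarrow> 'v \<Rightarrow> real) \<Rightarrow> 'v \<Rightarrow> (nat \<Rightarrow> real \<times> real) \<Rightarrow> nat \<Rightarrow> 'v" where
  "frozen_chain p s \<omega> 0 = s"
| "frozen_chain p s \<omega> (Suc k) = choose_state (p (frozen_chain p s \<omega> k)) (snd (\<omega> k))"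

lemma frozen_chain_shift: "frozen_chain p s (case_nat s0 \<omega>) (Suc k) = frozen_chain p (choose_state (p s) (snd s0)) \<omega> k"
  by (induction k) auto

lemma measurable_frozen_chain[measurable]: "(\<lambda>\<omega>. frozen_chain p s \<omega> k) \<in> measurable (noise_space lam) (count_space UNIV)"
proof (induction k)
  case 0 then show ?case by simp
next
  case (Suc k)
  have "(\<lambda>\<omega>. (\<lambda>w \<omega>. choose_state (p w) (snd (\<omega> k))) (frozen_chain p s \<omega> k) \<omega>) \<in> measurable (noise_space lam) (count_space UNIV)"
    by (rule measurable_compose_countable[OF _ Suc]) measurable
  then show ?case by simp
qed

lemma ring_time_shift: "ring_time (case_nat s0 \<omega>) (Suc k) = fst s0 + ring_time \<omega> k"
  unfolding ring_time_def sum.lessThan_Suc_shift by simp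

lemma ring_time_0[simp]: "ring_time \<omega> 0 = 0"
  unfolding ring_time_def by simp

lemma measurable_ring_time[measurable]: "(\<lambda>\<omega>. ring_time \<omega> k) \<in> borel_measurable (noise_space lam)"
  unfolding ring_time_def by measurable

lemma ring_time_mono: "(\<And>j. 0 \<le> fst (\<omega> j)) \<Longrightarrow> j \<le> k \<Longrightarrow> ring_time \<omega> j \<le> ring_time \<omega> k"
  unfolding ring_time_def by (rule sum_mono2) auto

lemma jump_state_shift: "jump_state a P (case_nat s0 \<omega>) y v (Suc k) =
  jump_state a P \<omega> (flow a v (fst s0) y) (choose_state (P (flow a v (fst s0) y) v) (snd s0)) k"
  by (induction k) (auto simp: Let_def split: prod.split)

lemma fst_jump_state_Suc:
  "fst (jump_state a P \<omega> y v (Suc k)) = flow a (snd (jump_state a P \<omega> y v k)) (fst (\<omega> k)) (fst (jump_state a P \<omega> y v k))"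
  by (simp add: Let_def split: prod.split)
lemma snd_jump_state_Suc:
  "snd (jump_state a P \<omega> y v (Suc k)) = choose_state (P (fst (jump_state a P \<omega> y v (Suc k))) (snd (jump_state a P \<omega> y v k))) (snd (\<omega> k))"
  by (simp add: Let_def split: prod.split)

lemma frozen_chain_law:
  fixes p :: "'v::finite \<Rightarrow> 'v \<Rightarrow> real"
  assumes lam: "lam > 0" and nn: "\<And>v w. p v w \<ge> 0" and s1: "\<And>v. (\<Sum>w\<in>UNIV. p v w) = 1"
  shows "emeasure (noise_space lam) {\<omega>. frozen_chain p s \<omega> k = w} = ennreal (mpow p k s w)"
proof (induction k arbitrary: s)
  case 0
  interpret prob_space "noise_space lam" by (rule prob_space_noise_space[OF lam])
  show ?case using emeasure_space_1 by (cases "s = w") auto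
next
  case (Suc k)
  have meas: "{\<omega>. frozen_chain p s \<omega> (Suc k) = w} \<in> sets (noise_space lam)"
    using measurable_sets[OF measurable_frozen_chain[of p s "Suc k" lam], of "{w}"] by (simp add: vimage_def)
  have "emeasure (noise_space lam) {\<omega>. frozen_chain p s \<omega> (Suc k) = w}
      = (\<integral>\<^sup>+ s0. emeasure (noise_space lam) {\<omega>. frozen_chain p (choose_state (p s) (snd s0)) \<omega> k = w} \<partial>noise_factor lam)"
    by (subst emeasure_noise_space_peel[OF lam meas]) (simp del: frozen_chain.simps add: frozen_chain_shift)
  also have "\<dots> = (\<integral>\<^sup>+ s0. ennreal (mpow p k (choose_state (p s) (snd s0)) w) \<partial>noise_factor lam)"
    using Suc by simp
  also have "\<dots> = ennreal (\<Sum>u\<in>UNIV. p s u * mpow p k u w)"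
    using nn s1 mpow_nonneg[of p, OF nn] by (intro nn_integral_choose_state[OF lam]) auto
  also have "\<dots> = ennreal (mpow p (Suc k) s w)" by (simp only: mpow_first)
  finally show ?case .
qed

lemma prob_frozen_chain_transient:
  fixes p :: "'v::finite \<Rightarrow> 'v \<Rightarrow> real"
  assumes lam: "lam > 0" and nn: "\<And>v w. p v w \<ge> 0" and s1: "\<And>v. (\<Sum>w\<in>UNIV. p v w) = 1"
  shows "emeasure (noise_space lam) {\<omega>. frozen_chain p v \<omega> m \<notin> E} = ennreal (transient_prob p E m v)"
proof -
  have "emeasure (noise_space lam) {\<omega>. frozen_chain p v \<omega> m \<notin> E}
      = emeasure (noise_space lam) (\<Union>w\<in>UNIV - E. {\<omega>. frozen_chain p v \<omega> m = w})"
    by (rule arg_cong[where f="emeasure _"]) auto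
  also have "\<dots> = (\<Sum>w\<in>UNIV - E. emeasure (noise_space lam) {\<omega>. frozen_chain p v \<omega> m = w})"
    using measurable_sets[OF measurable_frozen_chain[of p v m lam], of "{w}" for w]
    by (intro sum_emeasure[symmetric]) (auto simp: disjoint_family_on_def vimage_def)
  also have "\<dots> = ennreal (transient_prob p E m v)"
    unfolding transient_prob_def frozen_chain_law[OF lam nn s1]
    using mpow_nonneg[of p, OF nn] by (intro sum_ennreal) auto
  finally show ?thesis .
qed

lemma ring_time_sets[measurable]:
  "{\<omega>. t < ring_time \<omega> m} \<in> sets (noise_space lam)" "{\<omega>. ring_time \<omega> m \<le> t} \<in> sets (noise_space lam)"
  using measurable_sets[OF measurable_ring_time[of m lam], of "{t<..}"] measurable_sets[OF measurable_ring_time[of m lam], of "{..t}"]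
  by (auto simp: vimage_def)

lemma prob_ring_time_gt:
  assumes lam: "lam > 0"
  shows "emeasure (noise_space lam) {\<omega>. t < ring_time \<omega> m} \<le> ennreal (2^m * exp (- (lam * t / 2)))"
proof (induction m arbitrary: t)
  case 0
  interpret prob_space "noise_space lam" by (rule prob_space_noise_space[OF lam])
  have "1 \<le> exp (- (lam * t / 2))" if "t < 0"
    using mult_pos_neg[OF lam that] by simp
  then show ?case
    using emeasure_space_1 by (cases "t < 0") auto
next
  case (Suc m)
  have "emeasure (noise_space lam) {\<omega>. t < ring_time \<omega> (Suc m)}
      = (\<integral>\<^sup>+ s0. emeasure (noise_space lam) {\<omega>. t - fst s0 < ring_time \<omega> m} \<partial>noise_factor lam)"
    by (subst emeasure_noise_space_peel[OF lam ring_time_sets(1)]) (simp add: ring_time_shift algebra_simps)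
  also have "\<dots> \<le> (\<integral>\<^sup>+ s0. ennreal (2^m * exp (- (lam * (t - fst s0) / 2))) \<partial>noise_factor lam)"
    by (intro nn_integral_mono Suc)
  also have "\<dots> = (\<integral>\<^sup>+ s0. ennreal (2^m * exp (- (lam * t / 2) + lam / 2 * fst s0)) \<partial>noise_factor lam)"
    by (intro nn_integral_cong arg_cong[where f="\<lambda>e. ennreal (2^m * exp e)"]) (simp add: field_simps)
  also have "\<dots> = (\<integral>\<^sup>+ \<tau>. ennreal (2^m * exp (- (lam * t / 2) + lam / 2 * \<tau>)) \<partial>exp_dist lam)"
    by (rule noise_factor_nn_integral_fst[OF lam]) measurable
  also have "\<dots> = ennreal (2^Suc m * exp (- (lam * t / 2)))"
    using lam by (subst nn_integral_exp_dist_scaled_exp) auto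
  finally show ?case .
qed

lemma prob_ring_time_le:
  assumes lam: "lam > 0"
  shows "emeasure (noise_space lam) {\<omega>. ring_time \<omega> m \<le> t} \<le> ennreal (exp (lam * t) * (1/2)^m)"
proof (induction m arbitrary: t)
  case 0
  interpret prob_space "noise_space lam" by (rule prob_space_noise_space[OF lam])
  have "1 \<le> exp (lam * t)" if "0 \<le> t"
    using that lam by simp
  then show ?case
    using emeasure_space_1 by (cases "0 \<le> t") auto
next
  case (Suc m)
  have "emeasure (noise_space lam) {\<omega>. ring_time \<omega> (Suc m) \<le> t}
      = (\<integral>\<^sup>+ s0. emeasure (noise_space lam) {\<omega>. ring_time \<omega> m \<le> t - fst s0} \<partial>noise_factor lam)"
    by (subst emeasure_noise_space_peel[OF lam ring_time_sets(2)]) (simp add: ring_time_shift algebra_simps)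
  also have "\<dots> \<le> (\<integral>\<^sup>+ s0. ennreal (exp (lam * (t - fst s0)) * (1/2)^m) \<partial>noise_factor lam)"
    by (intro nn_integral_mono Suc)
  also have "\<dots> = (\<integral>\<^sup>+ s0. ennreal ((1/2)^m * exp (lam * t + - lam * fst s0)) \<partial>noise_factor lam)"
    by (simp add: algebra_simps)
  also have "\<dots> = (\<integral>\<^sup>+ \<tau>. ennreal ((1/2)^m * exp (lam * t + - lam * \<tau>)) \<partial>exp_dist lam)"
    by (rule noise_factor_nn_integral_fst[OF lam]) measurable
  also have "\<dots> = ennreal (exp (lam * t) * (1/2)^Suc m)"
    using lam by (subst nn_integral_exp_dist_scaled_exp) auto
  finally show ?case .
qed

lemma AE_ring_time_exceeds:
  assumes lam: "lam > 0"
  shows "AE \<omega> in noise_space lam. \<exists>k. t < ring_time \<omega> (Suc k)"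
proof -
  define N where "N = {\<omega>. \<not> (\<exists>k. t < ring_time \<omega> (Suc k))}"
  have "{\<omega>\<in>space (noise_space lam). \<exists>k. t < ring_time \<omega> (Suc k)} \<in> sets (noise_space lam)" by measurable
  from sets.compl_sets[OF this] have Nm: "N \<in> sets (noise_space lam)" unfolding N_def by (simp add: set_diff_eq)
  have le: "emeasure (noise_space lam) N \<le> ennreal (exp (lam * t) * (1/2)^Suc m)" for m
  proof -
    have "emeasure (noise_space lam) N \<le> emeasure (noise_space lam) {\<omega>. ring_time \<omega> (Suc m) \<le> t}"
      by (rule emeasure_mono) (auto simp: N_def not_less)
    also have "\<dots> \<le> ennreal (exp (lam * t) * (1/2)^Suc m)" by (rule prob_ring_time_le[OF lam])
    finally show ?thesis .
  qed
  have "(\<lambda>m. exp (lam * t) * (1/2::real)^Suc m) \<longlonglongrightarrow> exp (lam * t) * 0"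
    by (intro tendsto_mult tendsto_const LIMSEQ_Suc[OF LIMSEQ_power_zero]) simp
  then have "(\<lambda>m. ennreal (exp (lam * t) * (1/2)^Suc m)) \<longlonglongrightarrow> ennreal 0"
    by (intro tendsto_ennrealI) simp
  then have "emeasure (noise_space lam) N \<le> ennreal 0"
    by (rule LIMSEQ_le_const) (use le in auto)
  then have "emeasure (noise_space lam) N = 0" by simp
  then show ?thesis using AE_iff_measurable[OF Nm] unfolding N_def by simp
qed

locale coupled_process =
  fixes a :: "real^'n \<Rightarrow> 'v::finite \<Rightarrow> real^'n" and P :: "real^'n \<Rightarrow> 'v \<Rightarrow> 'v \<Rightarrow> real" and E :: "'v set"
    and Ma L K0 :: real
  assumes a_cont: "\<And>v. continuous_on UNIV (\<lambda>x. a x v)"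
    and a_bnd: "\<And>x v. norm (a x v) \<le> Ma"
    and a_lip: "\<And>x y v. norm (a x v - a y v) \<le> L * norm (x - y)" and L_pos: "L > 0"
    and P_nn: "\<And>x v w. P x v w \<ge> 0" and P_s1: "\<And>x v. (\<Sum>w\<in>UNIV. P x v w) = 1"
    and P_ab: "\<And>x e. e \<in> E \<Longrightarrow> P x e e = 1"
    and K0_pos: "K0 > 0" and P_lip: "\<And>x x' v. (\<Sum>w\<in>UNIV. \<bar>P x v w - P x' v w\<bar>) \<le> K0 * l1norm (x - x')"
begin

lemma Ma_nonneg: "Ma \<ge> 0" using a_bnd[of 0 undefined] norm_ge_zero order_trans by blast

lemma flow_ex1: "\<exists>!y. y 0 = x \<and> (\<forall>r. (y has_vector_derivative a (y r) w) (at r))"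
  by (rule ode_ex1_global_solution[of "\<lambda>y. a y w" Ma L]) (use a_cont a_bnd a_lip L_pos in auto)

lemma flow_solves: "flow a w 0 x = x \<and> (\<forall>r. ((\<lambda>s. flow a w s x) has_vector_derivative a (flow a w r x) w) (at r))"
  using theI'[OF flow_ex1[of x w]] unfolding flow_def by simp

lemma flow_0: "flow a w 0 x = x"
  using flow_solves by blast

lemma flow_has_derivative: "((\<lambda>s. flow a w s x) has_vector_derivative a (flow a w r x) w) (at r)"
  using flow_solves by blast

lemma flow_lipschitz_time: "norm (flow a w r x - flow a w s x) \<le> Ma * \<bar>r - s\<bar>"
proof -
  have *: "norm (flow a w b x - flow a w c x) \<le> Ma * b - Ma * c" if "c \<le> b" for b c
    by (rule dominated_increment[where D'="\<lambda>s. a (flow a w s x) w" and \<phi>'="\<lambda>_. Ma"])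
       (use that in \<open>auto intro!: has_vector_derivative_at_within flow_has_derivative has_vector_derivative_linear a_bnd\<close>)
  show ?thesis
  proof (cases "s \<le> r")
    case True
    then have e: "Ma * \<bar>r - s\<bar> = Ma * r - Ma * s" by (simp add: algebra_simps)
    show ?thesis unfolding e by (rule *[OF True])
  next
    case False
    then have e: "Ma * \<bar>r - s\<bar> = Ma * s - Ma * r" by (simp add: algebra_simps)
    show ?thesis unfolding e norm_minus_commute[of "flow a w r x"] by (rule *) (use False in simp)
  qed
qed

lemma flow_displacement: "norm (flow a w s x - x) \<le> Ma * \<bar>s\<bar>"
  using flow_lipschitz_time[of w s x 0] by (simp add: flow_0)

lemma l1norm_flow_displacement: "l1norm (flow a w s x - x) \<le> real CARD('n) * Ma * \<bar>s\<bar>"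
  using l1norm_le_card_norm[of "flow a w s x - x"] flow_displacement[of w s x]
  by (metis (no_types, opaque_lifting) mult.assoc mult_left_mono of_nat_0_le_iff order_trans)

lemma l1norm_flow_step: "0 \<le> \<tau> \<Longrightarrow> l1norm (flow a s \<tau> y - x) \<le> l1norm (y - x) + real CARD('n) * Ma * \<tau>"
  using l1norm_triangle[of "flow a s \<tau> y - y" "y - x"] l1norm_flow_displacement[of s \<tau> y] by simp

lemma flow_lipschitz_state: "\<bar>s\<bar> \<le> real k / (2*L) \<Longrightarrow> norm (flow a w s x - flow a w s x') \<le> 2^k * norm (x - x')"
  using ode_gap_growth[of "\<lambda>y. a y w" L "\<lambda>s. flow a w s x" "\<lambda>s. flow a w s x'" s k] a_lip L_pos flow_has_derivative
  by (simp add: flow_0)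

lemma flow_near_bound:
  assumes "dist p (s0, x0) < 1" and k: "(\<bar>s0\<bar> + 1) * (2*L) \<le> real k"
  shows "norm (flow a w (fst p) (snd p) - flow a w s0 x0) \<le> 2^k * norm (snd p - x0) + Ma * \<bar>fst p - s0\<bar>"
proof -
  have "\<bar>fst p - s0\<bar> < 1"
    using dist_fst_le[of p "(s0, x0)"] assms(1) by (simp add: dist_real_def)
  then have "\<bar>fst p\<bar> * (2*L) \<le> (\<bar>s0\<bar> + 1) * (2*L)"
    using L_pos by (intro mult_right_mono) auto
  then have "\<bar>fst p\<bar> \<le> real k / (2*L)"
    using k L_pos by (simp add: field_simps)
  then have "norm (flow a w (fst p) (snd p) - flow a w (fst p) x0) \<le> 2^k * norm (snd p - x0)"
    by (rule flow_lipschitz_state)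
  moreover have "norm (flow a w (fst p) x0 - flow a w s0 x0) \<le> Ma * \<bar>fst p - s0\<bar>"
    by (rule flow_lipschitz_time)
  ultimately show ?thesis
    using norm_triangle_ineq[of "flow a w (fst p) (snd p) - flow a w (fst p) x0" "flow a w (fst p) x0 - flow a w s0 x0"]
    by simp
qed

lemma flow_continuous: "continuous_on UNIV (\<lambda>p. flow a w (fst p) (snd p))"
proof (intro continuous_at_imp_continuous_on ballI)
  fix p0 :: "real \<times> (real^'n)"
  obtain s0 x0 where p0: "p0 = (s0, x0)" by fastforce
  obtain k :: nat where k: "(\<bar>s0\<bar> + 1) * (2*L) \<le> k" using real_arch_simple by blast
  have "\<forall>\<^sub>F p in at p0. norm (flow a w (fst p) (snd p) - flow a w s0 x0) \<le> 2^k * norm (snd p - x0) + Ma * \<bar>fst p - s0\<bar>"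
    unfolding p0 using flow_near_bound[OF _ k] eventually_at[of _ "(s0, x0)"] zero_less_one by blast
  moreover have "((\<lambda>p. 2^k * norm (snd p - x0) + Ma * \<bar>fst p - s0\<bar>) \<longlongrightarrow> 0) (at p0)"
    unfolding p0 by (auto intro!: tendsto_eq_intros)
  ultimately have "((\<lambda>p. flow a w (fst p) (snd p) - flow a w s0 x0) \<longlongrightarrow> 0) (at p0)"
    by (rule Lim_null_comparison)
  then show "isCont (\<lambda>p. flow a w (fst p) (snd p)) p0"
    unfolding isCont_def p0 by (simp add: LIM_zero_iff)
qed

lemma measurable_flow[measurable]:
  assumes [measurable]: "f \<in> borel_measurable M" "g \<in> borel_measurable M"
  shows "(\<lambda>\<omega>. flow a w (f \<omega>) (g \<omega>)) \<in> borel_measurable M"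
  by (rule borel_measurable_continuous_Pair[OF assms flow_continuous])

lemma transition_continuous: "continuous_on UNIV (\<lambda>y. P y v w)"
proof -
  have "(K0 * real CARD('n))-lipschitz_on UNIV (\<lambda>y. P y v w)"
  proof (rule lipschitz_onI)
    fix y y' :: "real^'n"
    have "\<bar>P y v w - P y' v w\<bar> \<le> (\<Sum>w\<in>UNIV. \<bar>P y v w - P y' v w\<bar>)"
      by (rule member_le_sum) auto
    also have "\<dots> \<le> K0 * l1norm (y - y')" by (rule P_lip)
    also have "\<dots> \<le> K0 * (real CARD('n) * norm (y - y'))"
      using K0_pos l1norm_le_card_norm by (intro mult_left_mono) auto
    finally show "dist (P y v w) (P y' v w) \<le> K0 * real CARD('n) * dist y y'"
      by (simp add: dist_norm dist_real_def mult.assoc)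
  qed (use K0_pos in auto)
  then show ?thesis by (rule lipschitz_on_continuous_on)
qed

lemma measurable_transition[measurable]: "f \<in> borel_measurable M \<Longrightarrow> (\<lambda>\<omega>. P (f \<omega>) v w) \<in> borel_measurable M"
  using measurable_compose[OF _ borel_measurable_continuous_onI[OF transition_continuous]] by blast

lemma measurable_jump_state:
  "(\<lambda>\<omega>. fst (jump_state a P \<omega> y0 v0 k)) \<in> borel_measurable (noise_space lam) \<and>
   (\<lambda>\<omega>. snd (jump_state a P \<omega> y0 v0 k)) \<in> measurable (noise_space lam) (count_space UNIV)"
proof (induction k)
  case 0 then show ?case by simp
next
  case (Suc k)
  note IH1[measurable] = Suc[THEN conjunct1] and IH2[measurable] = Suc[THEN conjunct2]
  have F: "(\<lambda>\<omega>. fst (jump_state a P \<omega> y0 v0 (Suc k))) \<in> borel_measurable (noise_space lam)"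
  proof -
    have "(\<lambda>\<omega>. (\<lambda>w \<omega>. flow a w (fst (\<omega> k)) (fst (jump_state a P \<omega> y0 v0 k))) (snd (jump_state a P \<omega> y0 v0 k)) \<omega>)
       \<in> borel_measurable (noise_space lam)"
      by (rule measurable_compose_countable[OF _ IH2]) measurable
    then show ?thesis unfolding fst_jump_state_Suc by simp
  qed
  note F[measurable]
  have S: "(\<lambda>\<omega>. snd (jump_state a P \<omega> y0 v0 (Suc k))) \<in> measurable (noise_space lam) (count_space UNIV)"
  proof -
    have "(\<lambda>\<omega>. (\<lambda>w \<omega>. choose_state (P (fst (jump_state a P \<omega> y0 v0 (Suc k))) w) (snd (\<omega> k))) (snd (jump_state a P \<omega> y0 v0 k)) \<omega>)
       \<in> measurable (noise_space lam) (count_space UNIV)"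
      by (rule measurable_compose_countable[OF _ IH2]) measurable
    then show ?thesis unfolding snd_jump_state_Suc[of a P _ y0 v0 k] by simp
  qed
  show ?case using F S by simp
qed

lemma measurable_fst_jump_state[measurable]: "(\<lambda>\<omega>. fst (jump_state a P \<omega> y0 v0 k)) \<in> borel_measurable (noise_space lam)"
  using measurable_jump_state by blast
lemma measurable_snd_jump_state[measurable]: "(\<lambda>\<omega>. snd (jump_state a P \<omega> y0 v0 k)) \<in> measurable (noise_space lam) (count_space UNIV)"
  using measurable_jump_state by blast

lemma measurable_V_proc[measurable]: "(\<lambda>\<omega>. V_proc a P x v t \<omega>) \<in> measurable (noise_space lam) (count_space UNIV)"
proof -
  have N: "(\<lambda>\<omega>. LEAST k. t < ring_time \<omega> (Suc k)) \<in> measurable (noise_space lam) (count_space UNIV)"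
    by measurable
  have J: "(\<lambda>\<omega>. (\<lambda>k \<omega>. snd (jump_state a P \<omega> x v k)) (LEAST k. t < ring_time \<omega> (Suc k)) \<omega>) \<in> measurable (noise_space lam) (count_space UNIV)"
    by (rule measurable_compose_countable[OF _ N]) measurable
  have C: "{\<omega> \<in> space (noise_space lam). \<exists>k. t < ring_time \<omega> (Suc k)} \<in> sets (noise_space lam)"
    by measurable
  show ?thesis unfolding V_proc_def
    by (rule measurable_If[OF J measurable_const C]) simp
qed

definition decouple_before :: "real^'n \<Rightarrow> real^'n \<Rightarrow> 'v \<Rightarrow> real \<Rightarrow> nat \<Rightarrow> (nat \<Rightarrow> real \<times> real) \<Rightarrow> bool" where
  "decouple_before x y s t K \<omega> \<longleftrightarrow> (\<exists>k<K. (\<forall>j\<le>k. snd (jump_state a P \<omega> y s j) = frozen_chain (P x) s \<omega> j) \<and>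
      frozen_chain (P x) s \<omega> k \<notin> E \<and> ring_time \<omega> (Suc k) \<le> t \<and>
      snd (jump_state a P \<omega> y s (Suc k)) \<noteq> frozen_chain (P x) s \<omega> (Suc k))"

definition decouples :: "real^'n \<Rightarrow> real^'n \<Rightarrow> 'v \<Rightarrow> real \<Rightarrow> (nat \<Rightarrow> real \<times> real) \<Rightarrow> bool" where
  "decouples x y s t \<omega> \<longleftrightarrow> (\<exists>K. decouple_before x y s t K \<omega>)"

definition first_jump_decouples :: "real^'n \<Rightarrow> real^'n \<Rightarrow> 'v \<Rightarrow> real \<Rightarrow> (real \<times> real) set" where
  "first_jump_decouples x y s t = {s0. fst s0 \<le> t \<and> s \<notin> E \<and>
     choose_state (P (flow a s (fst s0) y) s) (snd s0) \<noteq> choose_state (P x s) (snd s0)}"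

definition expected_transient_time :: "real^'n \<Rightarrow> nat \<Rightarrow> 'v \<Rightarrow> real" where
  "expected_transient_time x K s = (\<Sum>k<K. transient_prob (P x) E k s)"

lemma transient_prob_nn: "transient_prob (P x) E n v \<ge> 0"
  by (rule transient_prob_nonneg) (use P_nn P_s1 P_ab in auto)

lemma expected_transient_time_nonneg: "expected_transient_time x K s \<ge> 0"
  unfolding expected_transient_time_def by (intro sum_nonneg transient_prob_nn)

lemma expected_transient_time_Suc:
  "expected_transient_time x (Suc K) s = (if s \<in> E then 0 else 1) + (\<Sum>u\<in>UNIV. P x s u * expected_transient_time x K u)"
proof -
  have G0: "transient_prob (P x) E 0 s = (if s \<in> E then 0 else 1)"
    unfolding transient_prob_def by (simp add: sum.delta)
  have GS: "transient_prob (P x) E (Suc k) s = (\<Sum>u\<in>UNIV. P x s u * transient_prob (P x) E k u)" for k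
    using transient_prob_add[of "P x" E "Suc 0" k s] by (simp only: mpow_1 add_Suc add_0)
  have "expected_transient_time x (Suc K) s = transient_prob (P x) E 0 s + (\<Sum>k<K. transient_prob (P x) E (Suc k) s)"
    unfolding expected_transient_time_def by (rule sum.lessThan_Suc_shift)
  also have "(\<Sum>k<K. transient_prob (P x) E (Suc k) s) = (\<Sum>u\<in>UNIV. P x s u * expected_transient_time x K u)"
    unfolding GS expected_transient_time_def by (simp add: sum_distrib_left) (rule sum.swap)
  finally show ?thesis using G0 by simp
qed

lemma decouple_before_sets[measurable]: "{\<omega>. decouple_before x y s t K \<omega>} \<in> sets (noise_space lam)"
proof -
  have "{\<omega>\<in>space (noise_space lam). decouple_before x y s t K \<omega>} \<in> sets (noise_space lam)"
    unfolding decouple_before_def by measurable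
  then show ?thesis by simp
qed

lemma decouples_sets[measurable]: "{\<omega>. decouples x y s t \<omega>} \<in> sets (noise_space lam)"
  unfolding decouples_def Collect_ex_eq by (intro sets.countable_UN) auto

lemma first_jump_decouples_sets[measurable]: "first_jump_decouples x y s t \<in> sets (noise_factor lam)"
proof -
  have "{s0 \<in> space (noise_factor lam). fst s0 \<le> t \<and> s \<notin> E \<and>
      choose_state (P (flow a s (fst s0) y) s) (snd s0) \<noteq> choose_state (P x s) (snd s0)} \<in> sets (noise_factor lam)"
    by measurable
  then show ?thesis unfolding first_jump_decouples_def by simp
qed

lemma decouple_before_shift:
  assumes "decouple_before x y s t (Suc K) (case_nat s0 \<omega>)"
  shows "s0 \<in> first_jump_decouples x y s t \<or>
    decouple_before x (flow a s (fst s0) y) (choose_state (P x s) (snd s0)) (t - fst s0) K \<omega>"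
proof -
  define y1 where "y1 = flow a s (fst s0) y"
  define V1 where "V1 = choose_state (P y1 s) (snd s0)"
  define W1 where "W1 = choose_state (P x s) (snd s0)"
  have JS: "snd (jump_state a P (case_nat s0 \<omega>) y s (Suc j)) = snd (jump_state a P \<omega> y1 V1 j)" for j
    using jump_state_shift[of a P s0 \<omega> y s j] unfolding y1_def V1_def by simp
  have WS: "frozen_chain (P x) s (case_nat s0 \<omega>) (Suc j) = frozen_chain (P x) W1 \<omega> j" for j
    using frozen_chain_shift[of "P x" s s0 \<omega> j] unfolding W1_def by simp
  have RS: "ring_time (case_nat s0 \<omega>) (Suc j) = fst s0 + ring_time \<omega> j" for j
    by (rule ring_time_shift)
  from assms obtain k where k: "k < Suc K"
    and ag: "\<forall>j\<le>k. snd (jump_state a P (case_nat s0 \<omega>) y s j) = frozen_chain (P x) s (case_nat s0 \<omega>) j"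
    and nE: "frozen_chain (P x) s (case_nat s0 \<omega>) k \<notin> E" and rt: "ring_time (case_nat s0 \<omega>) (Suc k) \<le> t"
    and ne: "snd (jump_state a P (case_nat s0 \<omega>) y s (Suc k)) \<noteq> frozen_chain (P x) s (case_nat s0 \<omega>) (Suc k)"
    unfolding decouple_before_def by blast
  note step_simps = jump_state.simps(1) frozen_chain.simps(1)
  show ?thesis
  proof (cases k)
    case 0
    then have "fst s0 \<le> t" "s \<notin> E" "V1 \<noteq> W1"
      using rt RS[of 0] nE ne JS[of 0] WS[of 0] by (simp_all del: jump_state.simps frozen_chain.simps add: step_simps)
    then show ?thesis
      unfolding first_jump_decouples_def y1_def V1_def W1_def by simp
  next
    case (Suc k')
    then have "snd (jump_state a P (case_nat s0 \<omega>) y s (Suc 0)) = frozen_chain (P x) s (case_nat s0 \<omega>) (Suc 0)"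
      using ag by blast
    then have VW: "V1 = W1"
      using JS[of 0] WS[of 0] by (simp del: jump_state.simps frozen_chain.simps add: step_simps)
    have "decouple_before x y1 W1 (t - fst s0) K \<omega>" unfolding decouple_before_def
    proof (intro exI[of _ k'] conjI allI impI)
      show "k' < K" using k Suc by simp
      fix j assume "j \<le> k'"
      then have "snd (jump_state a P (case_nat s0 \<omega>) y s (Suc j)) = frozen_chain (P x) s (case_nat s0 \<omega>) (Suc j)"
        using ag Suc by auto
      then show "snd (jump_state a P \<omega> y1 W1 j) = frozen_chain (P x) W1 \<omega> j"
        using JS[of j] WS[of j] VW by (simp del: jump_state.simps frozen_chain.simps add: step_simps)
    next
      show "frozen_chain (P x) W1 \<omega> k' \<notin> E" "ring_time \<omega> (Suc k') \<le> t - fst s0"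
        "snd (jump_state a P \<omega> y1 W1 (Suc k')) \<noteq> frozen_chain (P x) W1 \<omega> (Suc k')"
        using nE rt ne Suc WS[of k'] RS[of "Suc k'"] JS[of "Suc k'"] WS[of "Suc k'"] VW
        by (simp_all del: jump_state.simps frozen_chain.simps add: step_simps)
    qed
    then show ?thesis unfolding y1_def W1_def by simp
  qed
qed

lemma emeasure_unif01_flow_decouple:
  assumes "0 \<le> \<tau>" "\<tau> \<le> t"
  shows "emeasure unif01 {u. choose_state (P (flow a s \<tau> y) s) u \<noteq> choose_state (P x s) u}
    \<le> ennreal (real CARD('v) * K0 * max 0 (l1norm (y - x) + real CARD('n) * Ma * t))"
proof -
  have "real CARD('n) * Ma * \<tau> \<le> real CARD('n) * Ma * t"
    using assms Ma_nonneg by (intro mult_left_mono) auto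
  then have "l1norm (flow a s \<tau> y - x) \<le> max 0 (l1norm (y - x) + real CARD('n) * Ma * t)"
    using l1norm_flow_step[OF assms(1), of s y x] by linarith
  then have "(\<Sum>w\<in>UNIV. \<bar>P (flow a s \<tau> y) s w - P x s w\<bar>) \<le> K0 * max 0 (l1norm (y - x) + real CARD('n) * Ma * t)"
    using P_lip[where x="flow a s \<tau> y" and x'=x and v=s] mult_left_mono[of _ _ K0] K0_pos
    by (meson less_imp_le order_trans)
  then have "real CARD('v) * (\<Sum>w\<in>UNIV. \<bar>P (flow a s \<tau> y) s w - P x s w\<bar>)
      \<le> real CARD('v) * K0 * max 0 (l1norm (y - x) + real CARD('n) * Ma * t)"
    by (simp add: mult.assoc mult_left_mono)
  then show ?thesis
    using emeasure_unif01_choose_state_differ[of "P (flow a s \<tau> y) s" "P x s"]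
    by (meson ennreal_leI order_trans)
qed

lemma first_jump_decouple_bound:
  assumes lam: "lam > 0"
  shows "emeasure (noise_factor lam) (first_jump_decouples x y s t)
    \<le> ennreal (real CARD('v) * K0 * max 0 (l1norm (y - x) + real CARD('n) * Ma * t) * (if s \<in> E then 0 else 1))"
proof (cases "s \<in> E")
  case True
  then show ?thesis by (simp add: first_jump_decouples_def)
next
  case False
  define R where "R = real CARD('v) * K0 * max 0 (l1norm (y - x) + real CARD('n) * Ma * t)"
  interpret E: prob_space "exp_dist lam" by (rule prob_space_exp_dist[OF lam])
  have slice: "(\<integral>\<^sup>+ u. indicator (first_jump_decouples x y s t) (\<tau>, u) \<partial>unif01) \<le> ennreal R" if "0 \<le> \<tau>" for \<tau>
  proof (cases "\<tau> \<le> t")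
    case True
    have "(\<integral>\<^sup>+ u. indicator (first_jump_decouples x y s t) (\<tau>, u) \<partial>unif01)
        = (\<integral>\<^sup>+ u. indicator {u. choose_state (P (flow a s \<tau> y) s) u \<noteq> choose_state (P x s) u} u \<partial>unif01)"
      using True False by (intro nn_integral_cong) (auto simp: first_jump_decouples_def indicator_def)
    also have "\<dots> = emeasure unif01 {u. choose_state (P (flow a s \<tau> y) s) u \<noteq> choose_state (P x s) u}"
      by (rule nn_integral_indicator) measurable
    also have "\<dots> \<le> ennreal R"
      unfolding R_def using emeasure_unif01_flow_decouple[OF that True] .
    finally show ?thesis .
  next
    case False
    then have "indicator (first_jump_decouples x y s t) (\<tau>, u) = (0::ennreal)" for u
      by (simp add: first_jump_decouples_def)
    then show ?thesis by simp
  qed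
  have "emeasure (noise_factor lam) (first_jump_decouples x y s t)
      = (\<integral>\<^sup>+ s0. indicator (first_jump_decouples x y s t) s0 \<partial>noise_factor lam)"
    by (rule nn_integral_indicator[symmetric]) simp
  also have "\<dots> = (\<integral>\<^sup>+ \<tau>. \<integral>\<^sup>+ u. indicator (first_jump_decouples x y s t) (\<tau>, u) \<partial>unif01 \<partial>exp_dist lam)"
    by (rule noise_factor_nn_integral[OF lam]) simp
  also have "\<dots> \<le> (\<integral>\<^sup>+ \<tau>. ennreal R \<partial>exp_dist lam)"
    using AE_exp_dist_nonneg[of lam] by (intro nn_integral_mono_AE) (simp add: eventually_mono slice)
  also have "\<dots> = ennreal R"
    using E.emeasure_space_1 by simp
  finally show ?thesis using False unfolding R_def by simp
qed

lemma decouple_before_Suc_case_nat: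
  assumes lam: "lam > 0"
  shows "emeasure (noise_space lam) {\<omega>. decouple_before x y s t (Suc K) (case_nat s0 \<omega>)}
    \<le> indicator (first_jump_decouples x y s t) s0 + emeasure (noise_space lam)
        {\<omega>. decouple_before x (flow a s (fst s0) y) (choose_state (P x s) (snd s0)) (t - fst s0) K \<omega>}"
proof -
  interpret prob_space "noise_space lam" by (rule prob_space_noise_space[OF lam])
  define B where "B = (if s0 \<in> first_jump_decouples x y s t then space (noise_space lam) else {})"
  have B: "B \<in> sets (noise_space lam)"
    unfolding B_def by (simp del: space_noise_space)
  have "emeasure (noise_space lam) {\<omega>. decouple_before x y s t (Suc K) (case_nat s0 \<omega>)}
      \<le> emeasure (noise_space lam)
          (B \<union> {\<omega>. decouple_before x (flow a s (fst s0) y) (choose_state (P x s) (snd s0)) (t - fst s0) K \<omega>})"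
  proof (rule emeasure_mono)
    show "{\<omega>. decouple_before x y s t (Suc K) (case_nat s0 \<omega>)}
      \<subseteq> B \<union> {\<omega>. decouple_before x (flow a s (fst s0) y) (choose_state (P x s) (snd s0)) (t - fst s0) K \<omega>}"
      using decouple_before_shift[of x y s t K s0] by (auto simp: B_def)
  qed (intro sets.Un B decouple_before_sets)
  also have "\<dots> \<le> emeasure (noise_space lam) B + emeasure (noise_space lam)
      {\<omega>. decouple_before x (flow a s (fst s0) y) (choose_state (P x s) (snd s0)) (t - fst s0) K \<omega>}"
    by (intro emeasure_subadditive B) simp
  also have "emeasure (noise_space lam) B = indicator (first_jump_decouples x y s t) s0"
    using emeasure_space_1 by (simp add: B_def)
  finally show ?thesis .
qed

lemma decouple_before_bound:
  assumes lam: "lam > 0"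
  shows "emeasure (noise_space lam) {\<omega>. decouple_before x y s t K \<omega>}
    \<le> ennreal (real CARD('v) * K0 * max 0 (l1norm (y - x) + real CARD('n) * Ma * t) * expected_transient_time x K s)"
proof (induction K arbitrary: y s t)
  case 0
  show ?case by (simp add: decouple_before_def)
next
  case (Suc K)
  define R where "R = real CARD('v) * K0 * max 0 (l1norm (y - x) + real CARD('n) * Ma * t)"
  have R: "R \<ge> 0" unfolding R_def using K0_pos by simp
  let ?F = "first_jump_decouples x y s t"
  let ?W = "\<lambda>s0. choose_state (P x s) (snd s0)"
  have IH: "emeasure (noise_space lam) {\<omega>. decouple_before x (flow a s (fst s0) y) (?W s0) (t - fst s0) K \<omega>}
      \<le> ennreal (R * expected_transient_time x K (?W s0))" if "0 \<le> fst s0" for s0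
  proof -
    have "max 0 (l1norm (flow a s (fst s0) y - x) + real CARD('n) * Ma * (t - fst s0))
        \<le> max 0 (l1norm (y - x) + real CARD('n) * Ma * t)"
      using l1norm_flow_step[OF that, of s y x] by (simp add: algebra_simps)
    then have "real CARD('v) * K0 * max 0 (l1norm (flow a s (fst s0) y - x) + real CARD('n) * Ma * (t - fst s0))
        * expected_transient_time x K (?W s0) \<le> R * expected_transient_time x K (?W s0)"
      unfolding R_def using K0_pos expected_transient_time_nonneg
      by (intro mult_right_mono mult_left_mono) auto
    then show ?thesis
      using Suc.IH[of "flow a s (fst s0) y" "?W s0" "t - fst s0"] by (meson ennreal_leI order_trans)
  qed
  have "emeasure (noise_space lam) {\<omega>. decouple_before x y s t (Suc K) \<omega>}
      = (\<integral>\<^sup>+ s0. emeasure (noise_space lam) {\<omega>. decouple_before x y s t (Suc K) (case_nat s0 \<omega>)} \<partial>noise_factor lam)"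
    by (rule emeasure_noise_space_peel[OF lam decouple_before_sets])
  also have "\<dots> \<le> (\<integral>\<^sup>+ s0. indicator ?F s0 + ennreal (R * expected_transient_time x K (?W s0)) \<partial>noise_factor lam)"
    using AE_noise_factor[OF lam]
    by (intro nn_integral_mono_AE) (auto elim!: eventually_mono
        intro: order_trans[OF decouple_before_Suc_case_nat[OF lam]] add_left_mono IH)
  also have "\<dots> = (\<integral>\<^sup>+ s0. indicator ?F s0 \<partial>noise_factor lam)
      + (\<integral>\<^sup>+ s0. ennreal (R * expected_transient_time x K (?W s0)) \<partial>noise_factor lam)"
    by (rule nn_integral_add) measurable
  also have "\<dots> = emeasure (noise_factor lam) ?F + ennreal (\<Sum>u\<in>UNIV. P x s u * (R * expected_transient_time x K u))"
    using nn_integral_choose_state[OF lam P_nn[of x s] P_s1[of x s], of "\<lambda>u. R * expected_transient_time x K u"]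
      R expected_transient_time_nonneg by simp
  also have "\<dots> \<le> ennreal (R * (if s \<in> E then 0 else 1)) + ennreal (\<Sum>u\<in>UNIV. P x s u * (R * expected_transient_time x K u))"
    using first_jump_decouple_bound[OF lam, of x y s t] unfolding R_def by (intro add_right_mono) auto
  also have "\<dots> = ennreal (R * expected_transient_time x (Suc K) s)"
    using R P_nn expected_transient_time_nonneg
    by (simp add: expected_transient_time_Suc sum_nonneg ennreal_plus[symmetric] sum_distrib_left algebra_simps
        del: ennreal_plus)
  finally show ?case unfolding R_def .
qed

lemma decouples_bound:
  assumes lam: "lam > 0" and Fb: "\<And>K. expected_transient_time x K s \<le> Fb"
  shows "emeasure (noise_space lam) {\<omega>. decouples x y s t \<omega>}
    \<le> ennreal (real CARD('v) * K0 * max 0 (l1norm (y - x) + real CARD('n) * Ma * t) * Fb)"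
proof -
  define R where "R = real CARD('v) * K0 * max 0 (l1norm (y - x) + real CARD('n) * Ma * t)"
  have R0: "R \<ge> 0" unfolding R_def using K0_pos by simp
  have inc: "incseq (\<lambda>K. {\<omega>. decouple_before x y s t K \<omega>})"
    unfolding incseq_def decouple_before_def by (auto intro: less_le_trans)
  have "emeasure (noise_space lam) {\<omega>. decouples x y s t \<omega>}
      = (SUP K. emeasure (noise_space lam) {\<omega>. decouple_before x y s t K \<omega>})"
    unfolding decouples_def using inc
    by (subst SUP_emeasure_incseq) (auto intro!: arg_cong[where f="emeasure _"])
  also have "\<dots> \<le> ennreal (R * Fb)"
  proof (rule SUP_least)
    fix K
    have "emeasure (noise_space lam) {\<omega>. decouple_before x y s t K \<omega>} \<le> ennreal (R * expected_transient_time x K s)"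
      using decouple_before_bound[OF lam] unfolding R_def .
    also have "\<dots> \<le> ennreal (R * Fb)" using Fb R0 by (intro ennreal_leI mult_left_mono) auto
    finally show "emeasure (noise_space lam) {\<omega>. decouple_before x y s t K \<omega>} \<le> ennreal (R * Fb)" .
  qed
  finally show ?thesis unfolding R_def .
qed

lemma choose_state_absorbing: "e \<in> E \<Longrightarrow> 0 \<le> u \<Longrightarrow> u < 1 \<Longrightarrow> choose_state (P y e) u = e"
  by (rule choose_state_point_mass) (use P_nn P_s1 P_ab in auto)

context
  fixes \<omega> :: "nat \<Rightarrow> real \<times> real"
  assumes valid: "\<forall>k. 0 \<le> fst (\<omega> k) \<and> 0 \<le> snd (\<omega> k) \<and> snd (\<omega> k) < 1"
begin

lemma frozen_chain_stays_absorbed: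
  assumes "frozen_chain (P x) v \<omega> m \<in> E" "m \<le> j"
  shows "frozen_chain (P x) v \<omega> j = frozen_chain (P x) v \<omega> m"
  using assms(2)
proof (induction j rule: dec_induct)
  case (step j)
  then show ?case using choose_state_absorbing[OF assms(1)] valid by simp
qed simp

lemma jump_state_eq_frozen_chain:
  assumes "\<not> decouples x x v t \<omega>" and "ring_time \<omega> k \<le> t" and "j \<le> k"
  shows "snd (jump_state a P \<omega> x v j) = frozen_chain (P x) v \<omega> j"
  using assms(2,3)
proof (induction k arbitrary: j)
  case (Suc k)
  have "ring_time \<omega> k \<le> t"
    using Suc.prems(1) ring_time_mono[of \<omega> k "Suc k"] valid by simp
  then have agree: "\<forall>i\<le>k. snd (jump_state a P \<omega> x v i) = frozen_chain (P x) v \<omega> i"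
    using Suc.IH by blast
  have "snd (jump_state a P \<omega> x v (Suc k)) = frozen_chain (P x) v \<omega> (Suc k)"
  proof (cases "frozen_chain (P x) v \<omega> k \<in> E")
    case True
    then show ?thesis
      using agree choose_state_absorbing[OF True] valid
      by (simp del: jump_state.simps add: snd_jump_state_Suc)
  next
    case False
    show ?thesis
    proof (rule ccontr)
      assume "snd (jump_state a P \<omega> x v (Suc k)) \<noteq> frozen_chain (P x) v \<omega> (Suc k)"
      then have "decouple_before x x v t (Suc k) \<omega>"
        unfolding decouple_before_def using agree False Suc.prems(1) by blast
      then show False using assms(1) by (auto simp: decouples_def)
    qed
  qed
  then show ?case using agree Suc.prems(2) by (auto simp: le_Suc_eq)
qed simp

lemma V_proc_eq_frozen_chain:
  assumes t: "0 < t" and rings: "\<exists>k. t < ring_time \<omega> (Suc k)" and nC: "\<not> decouples x x v t \<omega>"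
    and nT: "\<not> t < ring_time \<omega> m" and absorbed: "frozen_chain (P x) v \<omega> m \<in> E"
  shows "V_proc a P x v t \<omega> = frozen_chain (P x) v \<omega> m"
proof -
  define N where "N = (LEAST k. t < ring_time \<omega> (Suc k))"
  have V: "V_proc a P x v t \<omega> = snd (jump_state a P \<omega> x v N)"
    unfolding V_proc_def N_def using rings by simp
  have "m \<le> N"
  proof (rule ccontr)
    assume "\<not> m \<le> N"
    then have "ring_time \<omega> (Suc N) \<le> ring_time \<omega> m"
      using valid by (intro ring_time_mono) auto
    moreover have "t < ring_time \<omega> (Suc N)"
      unfolding N_def by (rule LeastI_ex[OF rings])
    ultimately show False using nT by simp
  qed
  moreover have "ring_time \<omega> N \<le> t"
  proof (cases N)
    case (Suc j)
    then have "\<not> t < ring_time \<omega> (Suc j)"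
      using not_less_Least[of j "\<lambda>k. t < ring_time \<omega> (Suc k)"] unfolding N_def by simp
    then show ?thesis using Suc by simp
  qed (use t in simp)
  ultimately show ?thesis
    using V jump_state_eq_frozen_chain[OF nC, of N N] frozen_chain_stays_absorbed[OF absorbed, of N] by simp
qed

end

lemma prob_V_proc_ne_frozen_chain:
  assumes lam: "lam > 0" and t: "t > 0" and Fb: "\<And>K. expected_transient_time x K v \<le> Fb"
  shows "measure (noise_space lam) {\<omega>. V_proc a P x v t \<omega> \<noteq> frozen_chain (P x) v \<omega> m}
     \<le> real CARD('v) * K0 * (real CARD('n) * Ma * t) * Fb + 2^m * exp (- (lam * t / 2))
       + transient_prob (P x) E m v"
proof -
  interpret N: prob_space "noise_space lam" by (rule prob_space_noise_space[OF lam])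
  define B1 where "B1 = {\<omega>. decouples x x v t \<omega>}"
  define B2 where "B2 = {\<omega>. t < ring_time \<omega> m}"
  define B3 where "B3 = {\<omega>. frozen_chain (P x) v \<omega> m \<notin> E}"
  have B1m: "B1 \<in> sets (noise_space lam)"
    unfolding B1_def by (rule decouples_sets)
  have B2m: "B2 \<in> sets (noise_space lam)"
    unfolding B2_def by (rule ring_time_sets)
  have B3m: "B3 \<in> sets (noise_space lam)"
    using measurable_sets[OF measurable_frozen_chain[of "P x" v m lam], of "UNIV - E"]
    unfolding B3_def by (simp add: vimage_def)
  have "AE \<omega> in noise_space lam. \<omega> \<in> {\<omega>. V_proc a P x v t \<omega> \<noteq> frozen_chain (P x) v \<omega> m}
      \<longrightarrow> \<omega> \<in> B1 \<union> B2 \<union> B3"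
    using AE_noise_space_valid[OF lam] AE_ring_time_exceeds[OF lam, of t]
  proof eventually_elim
    case (elim \<omega>)
    then show ?case
      using V_proc_eq_frozen_chain[OF elim(1) t elim(2), of x v m] unfolding B1_def B2_def B3_def by blast
  qed
  then have "measure (noise_space lam) {\<omega>. V_proc a P x v t \<omega> \<noteq> frozen_chain (P x) v \<omega> m}
      \<le> measure (noise_space lam) (B1 \<union> B2 \<union> B3)"
    by (rule N.finite_measure_mono_AE) (use B1m B2m B3m in auto)
  also have "\<dots> \<le> measure (noise_space lam) B1 + measure (noise_space lam) B2 + measure (noise_space lam) B3"
    using measure_Un_le[of "B1 \<union> B2" "noise_space lam" B3] measure_Un_le[of B1 "noise_space lam" B2]
      B1m B2m B3m by fastforce
  also have "measure (noise_space lam) B1 \<le> real CARD('v) * K0 * (real CARD('n) * Ma * t) * Fb"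
  proof (rule measure_le_of_emeasure_le[OF N.prob_space_axioms])
    have "max 0 (l1norm (x - x) + real CARD('n) * Ma * t) = real CARD('n) * Ma * t"
      using Ma_nonneg t by (simp add: l1norm_def)
    then show "emeasure (noise_space lam) B1 \<le> ennreal (real CARD('v) * K0 * (real CARD('n) * Ma * t) * Fb)"
      using decouples_bound[OF lam Fb, of x t] unfolding B1_def by simp
    show "0 \<le> real CARD('v) * K0 * (real CARD('n) * Ma * t) * Fb"
      using Fb[of 0] K0_pos Ma_nonneg t by (simp add: expected_transient_time_def)
  qed
  also have "measure (noise_space lam) B2 \<le> 2^m * exp (- (lam * t / 2))"
    unfolding B2_def by (rule measure_le_of_emeasure_le[OF N.prob_space_axioms prob_ring_time_gt[OF lam]]) simp
  also have "measure (noise_space lam) B3 = transient_prob (P x) E m v"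
    using prob_frozen_chain_transient[OF lam P_nn P_s1] transient_prob_nn
    unfolding B3_def by (simp add: measure_def)
  finally show ?thesis by simp
qed

end

lemma two_power_mult_exp_le:
  assumes "real m \<le> s / 4"
  shows "2 ^ m * exp (- (s / 2)) \<le> exp (- (s / 4))"
proof -
  have "(2::real) ^ m \<le> exp 1 ^ m"
    using exp_ge_add_one_self[of 1] by (intro power_mono) auto
  also have "\<dots> = exp (real m)"
    by (simp add: exp_of_nat_mult[symmetric])
  finally have "2 ^ m * exp (- (s / 2)) \<le> exp (real m) * exp (- (s / 2))"
    by simp
  also have "\<dots> = exp (real m - s / 2)"
    by (simp add: exp_add[symmetric])
  also have "\<dots> \<le> exp (- (s / 4))"
    using assms by simp
  finally show ?thesis .
qed

lemma power_le_exp_ln: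
  assumes "0 < \<rho>" "\<rho> < 1" "s - 1 \<le> real m"
  shows "\<rho> ^ m \<le> exp (s * ln \<rho>) / \<rho>"
proof -
  have "\<rho> ^ m = exp (real m * ln \<rho>)"
    using assms by (simp add: exp_of_nat_mult)
  also have "\<dots> \<le> exp ((s - 1) * ln \<rho>)"
    using assms by (intro exp_mono mult_right_mono_neg) auto
  also have "\<dots> = exp (s * ln \<rho>) / \<rho>"
    using assms by (simp add: left_diff_distrib exp_diff)
  finally show ?thesis .
qed

locale absorbing_coupled_process = coupled_process a P E Ma L K0
  for a :: "real^'n \<Rightarrow> 'v::finite \<Rightarrow> real^'n" and P E Ma L K0 +
  fixes n0 :: nat and z :: real
  assumes n0_pos: "n0 \<ge> 1" and z_pos: "0 < z" and z_less_1: "z < 1"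
    and transient_prob_n0: "\<And>x v. transient_prob (P x) E n0 v \<le> z"
begin

definition decay :: real where
  "decay = root n0 z"

lemma decay_pos: "0 < decay" and decay_less_1: "decay < 1"
  using n0_pos z_pos z_less_1 by (auto simp: decay_def real_root_lt_1_iff)

lemma transient_prob_le_decay: "transient_prob (P x) E k v \<le> decay ^ k / z"
  unfolding decay_def
  by (rule transient_prob_geometric[OF P_nn P_s1 P_ab transient_prob_n0 z_pos z_less_1 n0_pos])

lemma expected_transient_time_le: "expected_transient_time x K v \<le> 1 / (z * (1 - decay))"
proof -
  have "expected_transient_time x K v \<le> (\<Sum>k<K. decay ^ k) / z"
    unfolding expected_transient_time_def sum_divide_distrib
    by (intro sum_mono transient_prob_le_decay)
  also have "\<dots> = (1 - decay ^ K) / (1 - decay) / z"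
    using decay_less_1 by (simp add: sum_gp_strict)
  also have "\<dots> \<le> 1 / (1 - decay) / z"
    using decay_pos decay_less_1 z_pos by (intro divide_right_mono) auto
  finally show ?thesis by (simp add: mult.commute)
qed

lemma tv_le_ring_count:
  defines "C \<equiv> real CARD('v) * K0 * real CARD('n) * Ma / (z * (1 - decay))"
  assumes lam: "lam > 0" and t: "t > 0"
  shows "tv_norm (\<lambda>w. mu_t a P lam x v t w - mu_infty P E x v w)
    \<le> 2 * C * t + 2 * (2 ^ m * exp (- (lam * t / 2))) + 4 * transient_prob (P x) E m v"
proof -
  interpret N: prob_space "noise_space lam" by (rule prob_space_noise_space[OF lam])
  have law: "measure (noise_space lam) {\<omega>\<in>space (noise_space lam). frozen_chain (P x) v \<omega> m = w}
      = mpow (P x) m v w" for w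
    using frozen_chain_law[OF lam, of "P x"] mpow_nonneg[of "P x"] P_nn P_s1 by (simp add: measure_def)
  have "tv_norm (\<lambda>w. mu_t a P lam x v t w - mpow (P x) m v w)
      \<le> 2 * measure (noise_space lam) {\<omega>. V_proc a P x v t \<omega> \<noteq> frozen_chain (P x) v \<omega> m}"
    unfolding tv_norm_def mu_t_def law[symmetric]
    using tv_le_coupling[OF N.prob_space_axioms measurable_V_proc measurable_frozen_chain] by simp
  also have "\<dots> \<le> 2 * (C * t + 2 ^ m * exp (- (lam * t / 2)) + transient_prob (P x) E m v)"
  proof -
    have "real CARD('v) * K0 * (real CARD('n) * Ma * t) * (1 / (z * (1 - decay))) = C * t"
      by (simp add: C_def)
    then have "measure (noise_space lam) {\<omega>. V_proc a P x v t \<omega> \<noteq> frozen_chain (P x) v \<omega> m}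
        \<le> C * t + 2 ^ m * exp (- (lam * t / 2)) + transient_prob (P x) E m v"
      using prob_V_proc_ne_frozen_chain[OF lam t expected_transient_time_le[of x _ v], where m=m]
      by simp
    then show ?thesis
      by (simp add: mult_left_mono)
  qed
  finally show ?thesis
    using tv_norm_triangle[of "mu_t a P lam x v t" "mu_infty P E x v" "mpow (P x) m v"]
      tv_mpow_absorb_prob[OF P_nn[of x] P_s1[of x] P_ab[of _ x] transient_prob_n0[of x] z_pos z_less_1 n0_pos, of m v]
    unfolding tv_norm_def mu_infty_def by (simp add: algebra_simps)
qed

lemma tv_exponential_bound:
  "\<exists>K>0. \<exists>c1>0. \<forall>x v lam t. lam > 0 \<longrightarrow> t > 0 \<longrightarrow>
     tv_norm (\<lambda>w. mu_t a P lam x v t w - mu_infty P E x v w) \<le> K * exp (- c1 * t * lam) + K * t"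
proof -
  define C where "C = real CARD('v) * K0 * real CARD('n) * Ma / (z * (1 - decay))"
  define c1 where "c1 = min (1/4) (- ln decay / 4)"
  define K where "K = 2 * C + 2 + 4 / (z * decay)"
  have C: "C \<ge> 0"
    using K0_pos Ma_nonneg z_pos decay_less_1 by (simp add: C_def)
  have "tv_norm (\<lambda>w. mu_t a P lam x v t w - mu_infty P E x v w) \<le> K * exp (- c1 * t * lam) + K * t"
    if lam: "lam > 0" and t: "t > 0" for x v lam t
  proof -
    define m where "m = nat \<lfloor>lam * t / 4\<rfloor>"
    have "lam * t > 0"
      using lam t by simp
    then have m: "real m \<le> lam * t / 4" "lam * t / 4 - 1 \<le> real m"
      unfolding m_def by linarith+
    have c1: "c1 * (t * lam) \<le> 1/4 * (t * lam)" "c1 * (t * lam) \<le> - ln decay / 4 * (t * lam)"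
      using lam t unfolding c1_def by (intro mult_right_mono; simp)+
    have "exp (- (lam * t / 4)) \<le> exp (- c1 * t * lam)"
      using c1(1) by (simp add: algebra_simps)
    then have "2 ^ m * exp (- (lam * t / 2)) \<le> exp (- c1 * t * lam)"
      using two_power_mult_exp_le[OF m(1)] by linarith
    moreover have "transient_prob (P x) E m v \<le> exp (- c1 * t * lam) / (z * decay)"
    proof -
      have "decay ^ m \<le> exp (lam * t / 4 * ln decay) / decay"
        by (rule power_le_exp_ln[OF decay_pos decay_less_1 m(2)])
      also have "\<dots> \<le> exp (- c1 * t * lam) / decay"
        using c1(2) decay_pos by (intro divide_right_mono) (auto simp: algebra_simps)
      finally have "decay ^ m / z \<le> exp (- c1 * t * lam) / decay / z"
        using z_pos by (intro divide_right_mono) auto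
      then show ?thesis
        using transient_prob_le_decay[of x m v] by (simp add: mult.commute)
    qed
    ultimately have "tv_norm (\<lambda>w. mu_t a P lam x v t w - mu_infty P E x v w)
        \<le> 2 * C * t + 2 * exp (- c1 * t * lam) + 4 * (exp (- c1 * t * lam) / (z * decay))"
      using tv_le_ring_count[OF lam t, where x=x and v=v and m=m] unfolding C_def by linarith
    also have "\<dots> \<le> K * exp (- c1 * t * lam) + K * t"
      using C t z_pos decay_pos mult_nonneg_nonneg[OF C exp_ge_zero]
      unfolding K_def by (simp add: algebra_simps)
    finally show ?thesis .
  qed
  moreover have "K > 0" "c1 > 0"
    using C z_pos decay_pos decay_less_1 by (auto simp: K_def c1_def intro!: add_nonneg_pos)
  ultimately show ?thesis by blast
qed

end

theorem mainTheorem5: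
  fixes a :: "real^'n \<Rightarrow> 'v::finite \<Rightarrow> real^'n"
    and P :: "real^'n \<Rightarrow> 'v \<Rightarrow> 'v \<Rightarrow> real"
    and E :: "'v set"
  assumes a_cont: "\<And>v. continuous_on UNIV (\<lambda>x. a x v)"
    and a_bdd: "\<And>v. bounded (range (\<lambda>x. a x v))"
    and a_lip: "\<exists>La. \<forall>x y v. dist (a x v) (a y v) \<le> La * dist x y"
    and stoch: "\<And>x v w. P x v w \<ge> 0" "\<And>x v. (\<Sum>w\<in>UNIV. P x v w) = 1"
    and absorbing: "\<And>x e. e \<in> E \<Longrightarrow> P x e e = 1"
    and reach: "\<exists>n z0. n \<ge> 1 \<and> z0 < 1 \<and>
                  (\<forall>x v. (\<Sum>w\<in>UNIV - E. mpow (P x) n v w) \<le> z0)"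
    and P_lip: "\<exists>K0>0. \<forall>x x' v. (\<Sum>w\<in>UNIV. \<bar>P x v w - P x' v w\<bar>) \<le> K0 * l1norm (x - x')"
  shows "\<exists>K>0. \<exists>c1>0. \<forall>x v lam t. lam > 0 \<longrightarrow> t > 0 \<longrightarrow>
           tv_norm (\<lambda>w. mu_t a P lam x v t w - mu_infty P E x v w)
             \<le> K * exp (- c1 * t * lam) + K * t"
proof -
  obtain La where La: "\<And>x y v. dist (a x v) (a y v) \<le> La * dist x y"
    using a_lip by blast
  have "bounded (\<Union>v. range (\<lambda>x. a x v))"
    using a_bdd by (intro bounded_UN) auto
  then obtain Ma where Ma: "\<And>x v. norm (a x v) \<le> Ma"
    unfolding bounded_iff by blast
  obtain n0 z0 where n0: "n0 \<ge> 1" "z0 < 1" "\<And>x v. (\<Sum>w\<in>UNIV - E. mpow (P x) n0 v w) \<le> z0"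
    using reach by blast
  obtain K0 where K0: "K0 > 0" "\<And>x x' v. (\<Sum>w\<in>UNIV. \<bar>P x v w - P x' v w\<bar>) \<le> K0 * l1norm (x - x')"
    using P_lip by blast
  interpret absorbing_coupled_process a P E Ma "max La 1" K0 n0 "max z0 (1/2)"
  proof unfold_locales
    show "norm (a x v - a y v) \<le> max La 1 * norm (x - y)" for x y v
      using La[of x v y] mult_right_mono[OF max.cobounded1[of La 1] norm_ge_zero[of "x - y"]]
      by (simp add: dist_norm)
    show "transient_prob (P x) E n0 v \<le> max z0 (1/2)" for x v
      using n0(3)[of x v] by (simp add: transient_prob_def)
  qed (use a_cont Ma stoch absorbing K0 n0 in auto)
  show ?thesis
    by (rule tv_exponential_bound)
qed

end
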